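(* Let $M$ be a proper metric space and $\mathcal{X},\mathcal{Z},\mathcal{W}$ big families in $M$ with $\mathcal{X}\Cap\mathcal{W}\subseteq\mathcal{X}\Cap\mathcal{Z}$. Then the map $HX_n(\mathcal{X},\mathcal{X}\Cap\mathcal{Z})\to HX_n(\mathcal{X}\Cup\mathcal{W},(\mathcal{X}\Cap\mathcal{Z})\Cup\mathcal{W})$ induced by the inclusion $CX_\bullet(\mathcal{X})\subseteq CX_\bullet(\mathcal{X}\Cup\mathcal{W})$ is an isomorphism for every $n$.
   Context: A big family is a collection of subsets of $M$ closed under subsets, finite unions and $R$-thickenings ($Y_R=\{x:d(x,Y)\le R\}$). $\mathcal{X}\Cap\mathcal{Y}=\{X\cap Y\}$, $\mathcal{X}\Cup\mathcal{Y}=\{X\cup Y\}$ elementwise. With $M^{n+1}$ carrying the max metric and $\Delta_R$ the $R$-thickening of the multi-diagonal, a coarse $n$-chain is a complex-valued locally finite regular Borel measure on $M^{n+1}$ supported in some $\Delta_R$; it is supported on $Y$ if it vanishes outside $Y^{n+1}$, and $CX_n(\mathcal{Y})$ consists of coarse chains supported on some member of $\mathcal{Y}$. Differential $\partial\mu=\sum_{i}(-1)^i(\pi_i)_*\mu$, $\pi_i$ omitting coordinate $i$. $HX_n(\mathcal{X},\mathcal{X}\Cap\mathcal{Y})$ is the homology of $CX_\bullet(\mathcal{X})/CX_\bullet(\mathcal{X}\Cap\mathcal{Y})$. *)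

theory Defs
  imports "HOL-Analysis.Analysis"
begin

definition proper_metric_space :: "'a::metric_space itself \<Rightarrow> bool" where
  "proper_metric_space _ \<longleftrightarrow> (\<forall>(x::'a) r. compact (cball x r))"

text \<open>R-thickening Y_R = {x. d(x,Y) \<le> R} (d(x,{}) = +infinity, so the thickening of {} is {}).\<close>
definition thick :: "real \<Rightarrow> 'a::metric_space set \<Rightarrow> 'a set" where
  "thick R Y = {x. Y \<noteq> {} \<and> infdist x Y \<le> R}"

definition big_family :: "'a::metric_space set set \<Rightarrow> bool" where
  "big_family \<Y> \<longleftrightarrow>
     {} \<in> \<Y> \<and>
     (\<forall>Y\<in>\<Y>. \<forall>Y'. Y' \<subseteq> Y \<longrightarrow> Y' \<in> \<Y>) \<and>
     (\<forall>Y\<in>\<Y>. \<forall>Y'\<in>\<Y>. Y \<union> Y' \<in> \<Y>) \<and>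
     (\<forall>Y\<in>\<Y>. \<forall>R. thick R Y \<in> \<Y>)"

definition fam_cap :: "'a set set \<Rightarrow> 'a set set \<Rightarrow> 'a set set" where
  "fam_cap \<X> \<Y> = {X \<inter> Y | X Y. X \<in> \<X> \<and> Y \<in> \<Y>}"

definition fam_cup :: "'a set set \<Rightarrow> 'a set set \<Rightarrow> 'a set set" where
  "fam_cup \<X> \<Y> = {X \<union> Y | X Y. X \<in> \<X> \<and> Y \<in> \<Y>}"

text \<open>M^(n+1): extensional functions on {..n}; Borel sets of the product, and bounded ones
  (bounded for the max metric = relatively compact, M being proper).\<close>
definition cube :: "nat \<Rightarrow> 'a set \<Rightarrow> (nat \<Rightarrow> 'a) set" where
  "cube n Y = PiE {..n} (\<lambda>_. Y)"

definition bsets :: "nat \<Rightarrow> (nat \<Rightarrow> 'a::metric_space) set set" where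
  "bsets n = {A \<in> sets (PiM {..n} (\<lambda>_. borel)).
                \<exists>x0 r. \<forall>x\<in>A. \<forall>i\<le>n. dist (x i) x0 \<le> r}"

definition prod_top :: "nat \<Rightarrow> (nat \<Rightarrow> 'a::topological_space) topology" where
  "prod_top n = product_topology (\<lambda>_. euclidean) {..n}"

definition diag_thick :: "nat \<Rightarrow> real \<Rightarrow> (nat \<Rightarrow> 'a::metric_space) set" where
  "diag_thick n R = {x \<in> cube n UNIV. \<exists>y. \<forall>i\<le>n. dist (x i) y \<le> R}"

text \<open>Complex-valued locally finite regular Borel measure on M^(n+1): a complex set function on
  the bounded Borel sets (set to 0 elsewhere), countably additive, and regular.\<close>
definition locfin_measure :: "nat \<Rightarrow> ((nat \<Rightarrow> 'a::metric_space) set \<Rightarrow> complex) \<Rightarrow> bool" where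
  "locfin_measure n \<mu> \<longleftrightarrow>
     (\<forall>A. A \<notin> bsets n \<longrightarrow> \<mu> A = 0) \<and>
     (\<forall>F::nat \<Rightarrow> _. range F \<subseteq> bsets n \<longrightarrow> disjoint_family F \<longrightarrow> \<Union>(range F) \<in> bsets n \<longrightarrow>
         (\<lambda>i. \<mu> (F i)) sums \<mu> (\<Union>(range F))) \<and>
     (\<forall>A\<in>bsets n. \<forall>e>0. \<exists>K U. compactin (prod_top n) K \<and> openin (prod_top n) U \<and>
         K \<subseteq> A \<and> A \<subseteq> U \<and> (\<forall>B\<in>bsets n. B \<subseteq> U - K \<longrightarrow> cmod (\<mu> B) < e))"

definition supp_in_diag :: "nat \<Rightarrow> real \<Rightarrow> ((nat \<Rightarrow> 'a::metric_space) set \<Rightarrow> complex) \<Rightarrow> bool" where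
  "supp_in_diag n R \<mu> \<longleftrightarrow> (\<forall>A\<in>bsets n. A \<inter> diag_thick n R = {} \<longrightarrow> \<mu> A = 0)"

definition coarse_chain :: "nat \<Rightarrow> ((nat \<Rightarrow> 'a::metric_space) set \<Rightarrow> complex) \<Rightarrow> bool" where
  "coarse_chain n \<mu> \<longleftrightarrow> locfin_measure n \<mu> \<and> (\<exists>R. supp_in_diag n R \<mu>)"

definition supported_on :: "nat \<Rightarrow> 'a set \<Rightarrow> ((nat \<Rightarrow> 'a::metric_space) set \<Rightarrow> complex) \<Rightarrow> bool" where
  "supported_on n Y \<mu> \<longleftrightarrow> (\<forall>A\<in>bsets n. A \<inter> cube n Y = {} \<longrightarrow> \<mu> A = 0)"

definition CX :: "nat \<Rightarrow> 'a::metric_space set set \<Rightarrow> ((nat \<Rightarrow> 'a) set \<Rightarrow> complex) set" where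
  "CX n \<Y> = {\<mu>. coarse_chain n \<mu> \<and> (\<exists>Y\<in>\<Y>. supported_on n Y \<mu>)}"

definition omit :: "nat \<Rightarrow> nat \<Rightarrow> (nat \<Rightarrow> 'a) \<Rightarrow> (nat \<Rightarrow> 'a)" where
  "omit n i x = (\<lambda>j. if j \<le> n then (if j < i then x j else x (Suc j)) else undefined)"

text \<open>Push-forward of a coarse (n+1)-chain along pi_i; the preimage is cut down to the
  thickened diagonal carrying the chain (which makes it bounded; the value does not depend on
  the radius chosen).\<close>
definition pushfwd :: "nat \<Rightarrow> nat \<Rightarrow> ((nat \<Rightarrow> 'a::metric_space) set \<Rightarrow> complex) \<Rightarrow> ((nat \<Rightarrow> 'a) set \<Rightarrow> complex)" where
  "pushfwd n i \<mu> = (\<lambda>A. if A \<in> bsets n then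
       \<mu> (omit n i -` A \<inter> diag_thick (Suc n) (SOME R. supp_in_diag (Suc n) R \<mu>)) else 0)"

fun bd :: "nat \<Rightarrow> ((nat \<Rightarrow> 'a::metric_space) set \<Rightarrow> complex) \<Rightarrow> ((nat \<Rightarrow> 'a) set \<Rightarrow> complex)" where
  "bd 0 \<mu> = (\<lambda>A. 0)"
| "bd (Suc n) \<mu> = (\<lambda>A. \<Sum>i\<le>Suc n. (-1) ^ i * pushfwd n i \<mu> A)"

definition chain_add :: "('b \<Rightarrow> complex) \<Rightarrow> ('b \<Rightarrow> complex) \<Rightarrow> ('b \<Rightarrow> complex)" where
  "chain_add \<mu> \<nu> = (\<lambda>A. \<mu> A + \<nu> A)"

definition rel_cycles :: "nat \<Rightarrow> 'a::metric_space set set \<Rightarrow> 'a set set \<Rightarrow> ((nat \<Rightarrow> 'a) set \<Rightarrow> complex) set" where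
  "rel_cycles n \<X> \<A> = {c \<in> CX n \<X>. n = 0 \<or> bd n c \<in> CX (n - 1) \<A>}"

definition rel_bdries :: "nat \<Rightarrow> 'a::metric_space set set \<Rightarrow> 'a set set \<Rightarrow> ((nat \<Rightarrow> 'a) set \<Rightarrow> complex) set" where
  "rel_bdries n \<X> \<A> = {chain_add (bd (Suc n) b) a | b a. b \<in> CX (Suc n) \<X> \<and> a \<in> CX n \<A>}"

definition HX :: "nat \<Rightarrow> 'a::metric_space set set \<Rightarrow> 'a set set \<Rightarrow> ((nat \<Rightarrow> 'a) set \<Rightarrow> complex) set set" where
  "HX n \<X> \<A> = (\<lambda>c. {chain_add c b | b. b \<in> rel_bdries n \<X> \<A>}) ` rel_cycles n \<X> \<A>"

text \<open>Map induced by inclusion of chains: the class c + B goes to c + B'.\<close>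
definition HX_incl :: "nat \<Rightarrow> 'a::metric_space set set \<Rightarrow> 'a set set
     \<Rightarrow> ((nat \<Rightarrow> 'a) set \<Rightarrow> complex) set \<Rightarrow> ((nat \<Rightarrow> 'a) set \<Rightarrow> complex) set" where
  "HX_incl n \<X>' \<A>' C = {chain_add x b | x b. x \<in> C \<and> b \<in> rel_bdries n \<X>' \<A>'}"

end

theory Submission
  imports Defs "HOL-Library.Function_Algebras"
begin

text \<open>Write \<open>\<A> = \<X> \<Cap> \<Z>\<close>. A coarse chain supported on \<open>X \<union> W\<close> splits as a chain
  supported on \<open>closure X\<close> plus one supported on a thickening of \<open>W\<close>: restrict the measure to
  the cube over \<open>closure X\<close>; the rest lives on tuples that are close to each other and have a
  coordinate in \<open>closure W\<close>. Hence \<open>CX(\<X> \<Cup> \<W>) = CX(\<X>) + CX(\<W>)\<close>. Conversely a chain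
  supported both on \<open>X \<in> \<X>\<close> and on \<open>V \<union> W\<close> with \<open>V \<in> \<A>\<close>, \<open>W \<in> \<W>\<close> is supported on
  \<open>closure X \<inter> (V \<union> W) \<subseteq> V \<union> (closure X \<inter> W)\<close>, a member of \<open>\<A>\<close> by the hypothesis,
  so \<open>CX(\<X>) \<inter> CX(\<A> \<Cup> \<W>) = CX(\<A>)\<close>. These two identities make the inclusion
  \<open>CX(\<X>)/CX(\<A>) \<rightarrow> CX(\<X> \<Cup> \<W>)/CX(\<A> \<Cup> \<W>)\<close> an isomorphism of chain complexes,
  which is checked directly on relative cycles and relative boundaries. Most of the work is
  measure theory: push-forwards along face maps are again locally finite regular measures, so
  the boundary is additive and preserves chains.\<close>

subsection \<open>Locally finite measures\<close>

type_synonym 'a chain_measure = "(nat \<Rightarrow> 'a) set \<Rightarrow> complex"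

abbreviation cube_borel :: "nat \<Rightarrow> (nat \<Rightarrow> 'a::metric_space) measure" where
  "cube_borel n \<equiv> PiM {..n} (\<lambda>_. borel)"

lemma space_cube_borel: "space (cube_borel n :: (nat \<Rightarrow> 'a::metric_space) measure) = cube n UNIV"
  by (simp add: space_PiM cube_def)

lemma topspace_prod_top: "topspace (prod_top n) = cube n UNIV"
  by (simp add: prod_top_def cube_def)

lemma mem_cube_iff: "x \<in> cube n Y \<longleftrightarrow> x \<in> extensional {..n} \<and> (\<forall>i\<le>n. x i \<in> Y)"
  by (auto simp: cube_def PiE_iff)

lemma cube_mono: "Y \<subseteq> Y' \<Longrightarrow> cube n Y \<subseteq> cube n Y'"
  unfolding cube_def by (rule PiE_mono) blast

lemma cube_Int: "cube n (Y \<inter> Y') = cube n Y \<inter> cube n Y'"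
  unfolding cube_def by (rule PiE_Int[symmetric])

lemma sets_cube: "Y \<in> sets borel \<Longrightarrow> cube n Y \<in> sets (cube_borel n)"
  unfolding cube_def by (intro sets_PiM_I_finite) auto

lemma bsets_iff: "A \<in> bsets n \<longleftrightarrow> A \<in> sets (cube_borel n) \<and> (\<exists>x0 r. A \<subseteq> cube n (cball x0 r))"
proof -
  have "(\<forall>x\<in>A. \<forall>i\<le>n. dist (x i) x0 \<le> r) \<longleftrightarrow> A \<subseteq> cube n (cball x0 r)"
    if "A \<in> sets (cube_borel n)" for x0 r
    using sets.sets_into_space[OF that] by (auto simp: space_cube_borel mem_cube_iff dist_commute)
  then show ?thesis unfolding bsets_def by blast
qed

lemma bsets_sets: "A \<in> bsets n \<Longrightarrow> A \<in> sets (cube_borel n)"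
  by (simp add: bsets_def)

lemma bsets_subset: "A \<in> bsets n \<Longrightarrow> B \<in> sets (cube_borel n) \<Longrightarrow> B \<subseteq> A \<Longrightarrow> B \<in> bsets n"
  unfolding bsets_def by blast

lemma bsets_Int: "A \<in> bsets n \<Longrightarrow> B \<in> sets (cube_borel n) \<Longrightarrow> A \<inter> B \<in> bsets n"
  by (rule bsets_subset) (auto intro: bsets_sets)

lemma bsets_Diff: "A \<in> bsets n \<Longrightarrow> B \<in> sets (cube_borel n) \<Longrightarrow> A - B \<in> bsets n"
  by (rule bsets_subset) (auto intro: bsets_sets)

lemma bsets_empty: "{} \<in> bsets n"
  unfolding bsets_def by auto

definition regular_at :: "nat \<Rightarrow> 'a::metric_space chain_measure \<Rightarrow> (nat \<Rightarrow> 'a) set \<Rightarrow> real \<Rightarrow> bool" where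
  "regular_at n \<mu> A e \<longleftrightarrow> (\<exists>K U. compactin (prod_top n) K \<and> openin (prod_top n) U \<and> K \<subseteq> A \<and> A \<subseteq> U \<and>
     (\<forall>B\<in>bsets n. B \<subseteq> U - K \<longrightarrow> cmod (\<mu> B) < e))"

lemma regular_atI:
  assumes "compactin (prod_top n) K" "openin (prod_top n) U" "K \<subseteq> A" "A \<subseteq> U"
    "\<And>B. B \<in> bsets n \<Longrightarrow> B \<subseteq> U - K \<Longrightarrow> cmod (\<mu> B) < e"
  shows "regular_at n \<mu> A e"
  unfolding regular_at_def using assms by blast

lemma regular_atE:
  assumes "regular_at n \<mu> A e"
  obtains K U where "compactin (prod_top n) K" "openin (prod_top n) U" "K \<subseteq> A" "A \<subseteq> U"
    "\<And>B. B \<in> bsets n \<Longrightarrow> B \<subseteq> U - K \<Longrightarrow> cmod (\<mu> B) < e"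
proof -
  obtain K U where KU: "compactin (prod_top n) K \<and> openin (prod_top n) U \<and> K \<subseteq> A \<and> A \<subseteq> U \<and>
      (\<forall>B\<in>bsets n. B \<subseteq> U - K \<longrightarrow> cmod (\<mu> B) < e)"
    using assms unfolding regular_at_def by (elim exE)
  show ?thesis by (rule that[of K U]) (use KU in auto)
qed

lemma locfin_measure_iff:
  "locfin_measure n \<mu> \<longleftrightarrow> (\<forall>A. A \<notin> bsets n \<longrightarrow> \<mu> A = 0) \<and>
     (\<forall>F::nat \<Rightarrow> _. range F \<subseteq> bsets n \<longrightarrow> disjoint_family F \<longrightarrow> \<Union>(range F) \<in> bsets n \<longrightarrow>
         (\<lambda>i. \<mu> (F i)) sums \<mu> (\<Union>(range F))) \<and>
     (\<forall>A\<in>bsets n. \<forall>e>0. regular_at n \<mu> A e)"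
  unfolding locfin_measure_def regular_at_def ..

lemma locfin_measureI:
  assumes "\<And>A. A \<notin> bsets n \<Longrightarrow> \<mu> A = 0"
    and "\<And>F::nat \<Rightarrow> _. range F \<subseteq> bsets n \<Longrightarrow> disjoint_family F \<Longrightarrow> \<Union>(range F) \<in> bsets n
          \<Longrightarrow> (\<lambda>i. \<mu> (F i)) sums \<mu> (\<Union>(range F))"
    and "\<And>A e. A \<in> bsets n \<Longrightarrow> e > 0 \<Longrightarrow> regular_at n \<mu> A e"
  shows "locfin_measure n \<mu>"
  unfolding locfin_measure_iff using assms by blast

lemma locfin_measure_outside: "locfin_measure n \<mu> \<Longrightarrow> A \<notin> bsets n \<Longrightarrow> \<mu> A = 0"
  unfolding locfin_measure_iff by blast

lemma locfin_measure_sums: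
  "locfin_measure n \<mu> \<Longrightarrow> range F \<subseteq> bsets n \<Longrightarrow> disjoint_family F \<Longrightarrow> \<Union>(range F) \<in> bsets n
   \<Longrightarrow> (\<lambda>i. \<mu> (F i)) sums \<mu> (\<Union>(range F))"
  unfolding locfin_measure_iff by blast

lemma locfin_measure_regular: "locfin_measure n \<mu> \<Longrightarrow> A \<in> bsets n \<Longrightarrow> e > 0 \<Longrightarrow> regular_at n \<mu> A e"
  unfolding locfin_measure_iff by blast

lemma locfin_measure_empty:
  assumes "locfin_measure n \<mu>" shows "\<mu> {} = 0"
proof -
  have "(\<lambda>_::nat. \<mu> {}) sums \<mu> {}"
    using locfin_measure_sums[OF assms, of "\<lambda>_. {}"] by (simp add: bsets_empty disjoint_family_on_def)
  then have "(\<lambda>_::nat. \<mu> {}) \<longlonglongrightarrow> 0" by (rule summable_LIMSEQ_zero[OF sums_summable])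
  then show ?thesis by (simp add: LIMSEQ_const_iff)
qed

lemma locfin_measure_split:
  assumes "locfin_measure n \<mu>" "A \<in> bsets n" "S \<in> sets (cube_borel n)"
  shows "\<mu> A = \<mu> (A \<inter> S) + \<mu> (A - S)"
proof -
  define F where "F = (\<lambda>k::nat. if k = 0 then A \<inter> S else if k = 1 then A - S else {})"
  have "range F \<subseteq> bsets n" using assms bsets_empty bsets_Int bsets_Diff unfolding F_def by auto
  moreover have "disjoint_family F" unfolding F_def disjoint_family_on_def by auto
  moreover have "\<Union>(range F) = A" unfolding F_def by (auto split: if_splits)
  ultimately have "(\<lambda>k. \<mu> (F k)) sums \<mu> A" using locfin_measure_sums[OF assms(1)] assms(2) by metis
  moreover have "(\<lambda>k. \<mu> (F k)) sums (\<Sum>k\<in>{0,1}. \<mu> (F k))"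
    by (rule sums_finite) (auto simp: F_def locfin_measure_empty[OF assms(1)])
  ultimately show ?thesis by (simp add: sums_unique2 F_def)
qed

lemma locfin_measure_0: "locfin_measure n (\<lambda>A. 0)"
proof (rule locfin_measureI)
  fix A :: "(nat \<Rightarrow> 'a) set" and e :: real assume "A \<in> bsets n" "e > 0"
  moreover have "A \<subseteq> topspace (prod_top n)"
    using sets.sets_into_space[OF bsets_sets[OF \<open>A \<in> bsets n\<close>]]
    by (simp add: topspace_prod_top space_cube_borel)
  ultimately show "regular_at n (\<lambda>A. 0) A e" by (intro regular_atI[of n "{}" "topspace (prod_top n)"]) auto
qed (auto simp: sums_0)

lemma locfin_measure_add:
  assumes "locfin_measure n \<mu>" "locfin_measure n \<nu>"
  shows "locfin_measure n (\<mu> + \<nu>)"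
proof (rule locfin_measureI)
  fix F :: "nat \<Rightarrow> (nat \<Rightarrow> 'a) set" assume "range F \<subseteq> bsets n" "disjoint_family F" "\<Union> (range F) \<in> bsets n"
  then show "(\<lambda>i. (\<mu> + \<nu>) (F i)) sums (\<mu> + \<nu>) (\<Union> (range F))"
    using locfin_measure_sums[OF assms(1)] locfin_measure_sums[OF assms(2)] by (simp add: sums_add)
next
  fix A :: "(nat \<Rightarrow> 'a) set" and e :: real assume A: "A \<in> bsets n" and "e > 0"
  then have e2: "e / 2 > 0" by simp
  obtain K1 U1 where KU1: "compactin (prod_top n) K1" "openin (prod_top n) U1" "K1 \<subseteq> A" "A \<subseteq> U1"
      "\<And>B. B \<in> bsets n \<Longrightarrow> B \<subseteq> U1 - K1 \<Longrightarrow> cmod (\<mu> B) < e / 2"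
    using locfin_measure_regular[OF assms(1) A e2] by (elim regular_atE) blast
  obtain K2 U2 where KU2: "compactin (prod_top n) K2" "openin (prod_top n) U2" "K2 \<subseteq> A" "A \<subseteq> U2"
      "\<And>B. B \<in> bsets n \<Longrightarrow> B \<subseteq> U2 - K2 \<Longrightarrow> cmod (\<nu> B) < e / 2"
    using locfin_measure_regular[OF assms(2) A e2] by (elim regular_atE) blast
  show "regular_at n (\<mu> + \<nu>) A e"
  proof (rule regular_atI[of n "K1 \<union> K2" "U1 \<inter> U2"])
    fix B assume "B \<in> bsets n" "B \<subseteq> (U1 \<inter> U2) - (K1 \<union> K2)"
    then have "cmod (\<mu> B) < e / 2" "cmod (\<nu> B) < e / 2" using KU1(5) KU2(5) by auto
    then show "cmod ((\<mu> + \<nu>) B) < e" using norm_triangle_ineq[of "\<mu> B" "\<nu> B"] by simp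
  qed (use KU1 KU2 in \<open>auto simp: compactin_Un openin_Int\<close>)
qed (simp add: locfin_measure_outside[OF assms(1)] locfin_measure_outside[OF assms(2)])

lemma locfin_measure_cmult:
  assumes "locfin_measure n \<mu>"
  shows "locfin_measure n (\<lambda>A. c * \<mu> A)"
proof (rule locfin_measureI)
  fix F :: "nat \<Rightarrow> (nat \<Rightarrow> 'a) set" assume "range F \<subseteq> bsets n" "disjoint_family F" "\<Union> (range F) \<in> bsets n"
  then show "(\<lambda>i. c * \<mu> (F i)) sums (c * \<mu> (\<Union> (range F)))"
    using locfin_measure_sums[OF assms] by (simp add: sums_mult)
next
  fix A :: "(nat \<Rightarrow> 'a) set" and e :: real assume A: "A \<in> bsets n" and e: "e > 0"
  have e': "e / (cmod c + 1) > 0" using e by (simp add: add_nonneg_pos)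
  obtain K U where KU: "compactin (prod_top n) K" "openin (prod_top n) U" "K \<subseteq> A" "A \<subseteq> U"
      "\<And>B. B \<in> bsets n \<Longrightarrow> B \<subseteq> U - K \<Longrightarrow> cmod (\<mu> B) < e / (cmod c + 1)"
    using locfin_measure_regular[OF assms A e'] by (elim regular_atE) blast
  show "regular_at n (\<lambda>A. c * \<mu> A) A e"
  proof (rule regular_atI[OF KU(1-4)])
    fix B assume "B \<in> bsets n" "B \<subseteq> U - K"
    have "cmod (c * \<mu> B) \<le> (cmod c + 1) * cmod (\<mu> B)" by (simp add: norm_mult mult_right_mono)
    also have "\<dots> < e" using KU(5)[OF \<open>B \<in> bsets n\<close> \<open>B \<subseteq> U - K\<close>]
      by (simp add: pos_less_divide_eq add_nonneg_pos mult.commute)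
    finally show "cmod (c * \<mu> B) < e" .
  qed
qed (simp add: locfin_measure_outside[OF assms])

lemma regular_at_cong:
  "(\<And>B. B \<in> bsets n \<Longrightarrow> \<mu> B = \<nu> B) \<Longrightarrow> regular_at n \<mu> A e \<longleftrightarrow> regular_at n \<nu> A e"
  unfolding regular_at_def by auto

lemma locfin_measure_vimage_Int:
  fixes f :: "(nat \<Rightarrow> 'a::metric_space) \<Rightarrow> (nat \<Rightarrow> 'b::metric_space)"
  assumes lf: "locfin_measure m \<mu>"
    and bounded: "\<And>A. A \<in> bsets n \<Longrightarrow> f -` A \<inter> D \<in> bsets m"
    and regular: "\<And>A e. A \<in> bsets n \<Longrightarrow> e > 0 \<Longrightarrow> regular_at n (\<lambda>B. \<mu> (f -` B \<inter> D)) A e"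
  shows "locfin_measure n (\<lambda>A. if A \<in> bsets n then \<mu> (f -` A \<inter> D) else 0)"
proof (rule locfin_measureI)
  fix F :: "nat \<Rightarrow> (nat \<Rightarrow> 'b) set" assume F: "range F \<subseteq> bsets n" "disjoint_family F" "\<Union> (range F) \<in> bsets n"
  have "range (\<lambda>k. f -` F k \<inter> D) \<subseteq> bsets m" using F(1) bounded by blast
  moreover have "disjoint_family (\<lambda>k. f -` F k \<inter> D)" using F(2) unfolding disjoint_family_on_def by blast
  moreover have "(\<Union>k. f -` F k \<inter> D) = f -` (\<Union>(range F)) \<inter> D" by blast
  ultimately have "(\<lambda>k. \<mu> (f -` F k \<inter> D)) sums \<mu> (f -` (\<Union>(range F)) \<inter> D)"
    using locfin_measure_sums[OF lf] bounded[OF F(3)] by metis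
  then show "(\<lambda>k. if F k \<in> bsets n then \<mu> (f -` F k \<inter> D) else 0) sums
      (if \<Union> (range F) \<in> bsets n then \<mu> (f -` \<Union> (range F) \<inter> D) else 0)"
    using F(1,3) by (simp add: image_subset_iff)
qed (simp_all add: regular regular_at_cong[of n _ "\<lambda>B. \<mu> (f -` B \<inter> D)"])

lemma locfin_measure_restrict:
  assumes lf: "locfin_measure n \<mu>" and S: "S \<in> sets (cube_borel n)"
  shows "locfin_measure n (\<lambda>A. if A \<in> bsets n then \<mu> (A \<inter> S) else 0)"
proof -
  have "regular_at n (\<lambda>B. \<mu> (id -` B \<inter> S)) A e" if A: "A \<in> bsets n" and e: "e > 0" for A e
  proof -
    obtain K U where KU: "compactin (prod_top n) K" "openin (prod_top n) U" "K \<subseteq> A" "A \<subseteq> U"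
        "\<And>B. B \<in> bsets n \<Longrightarrow> B \<subseteq> U - K \<Longrightarrow> cmod (\<mu> B) < e"
      using locfin_measure_regular[OF lf A e] by (elim regular_atE) blast
    show ?thesis by (rule regular_atI[OF KU(1-4)]) (use KU(5) bsets_Int[OF _ S] in auto)
  qed
  then have "locfin_measure n (\<lambda>A. if A \<in> bsets n then \<mu> (id -` A \<inter> S) else 0)"
    using bsets_Int[OF _ S] by (intro locfin_measure_vimage_Int[OF lf]) auto
  then show ?thesis by (simp only: vimage_id id_apply)
qed

subsection \<open>Coarse chains and supports\<close>

lemma diag_thick_mono: "R \<le> R' \<Longrightarrow> diag_thick n R \<subseteq> diag_thick n R'"
  unfolding diag_thick_def by (auto intro: order_trans)

lemma supp_in_diag_mono: "supp_in_diag n R \<mu> \<Longrightarrow> R \<le> R' \<Longrightarrow> supp_in_diag n R' \<mu>"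
  unfolding supp_in_diag_def using diag_thick_mono by blast

lemma coarse_chainE:
  assumes "coarse_chain n \<mu>"
  obtains R where "locfin_measure n \<mu>" "supp_in_diag n R \<mu>"
  using assms unfolding coarse_chain_def by blast

lemma coarse_chain_common_radius:
  assumes "coarse_chain n \<mu>" "coarse_chain n \<nu>"
  obtains R where "supp_in_diag n R \<mu>" "supp_in_diag n R \<nu>"
proof -
  obtain R1 R2 where "supp_in_diag n R1 \<mu>" "supp_in_diag n R2 \<nu>"
    using assms by (metis coarse_chainE)
  then show ?thesis
    using that supp_in_diag_mono[of n R1 _ "max R1 R2"] supp_in_diag_mono[of n R2 _ "max R1 R2"] by auto
qed

lemma coarse_chain_0: "coarse_chain n (\<lambda>A. 0)"
  unfolding coarse_chain_def supp_in_diag_def by (simp add: locfin_measure_0)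

lemma coarse_chain_add:
  assumes "coarse_chain n \<mu>" "coarse_chain n \<nu>"
  shows "coarse_chain n (\<mu> + \<nu>)"
proof -
  obtain R where "supp_in_diag n R \<mu>" "supp_in_diag n R \<nu>"
    using assms by (rule coarse_chain_common_radius)
  then have "supp_in_diag n R (\<mu> + \<nu>)" unfolding supp_in_diag_def by simp
  then show ?thesis using assms locfin_measure_add unfolding coarse_chain_def by blast
qed

lemma coarse_chain_cmult: "coarse_chain n \<mu> \<Longrightarrow> coarse_chain n (\<lambda>A. c * \<mu> A)"
  unfolding coarse_chain_def supp_in_diag_def using locfin_measure_cmult by fastforce

lemma uminus_eq_cmult: "- (\<mu> :: 'b \<Rightarrow> complex) = (\<lambda>A. (-1) * \<mu> A)"
  by (simp add: fun_eq_iff)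

lemma coarse_chain_diff: "coarse_chain n \<mu> \<Longrightarrow> coarse_chain n \<nu> \<Longrightarrow> coarse_chain n (\<mu> - \<nu>)"
  unfolding diff_conv_add_uminus uminus_eq_cmult by (rule coarse_chain_add[OF _ coarse_chain_cmult])

lemma coarse_chain_sum:
  "finite I \<Longrightarrow> (\<And>i. i \<in> I \<Longrightarrow> coarse_chain n (f i)) \<Longrightarrow> coarse_chain n (\<lambda>A. \<Sum>i\<in>I. f i A)"
proof (induction I rule: finite_induct)
  case empty
  then show ?case by (simp add: coarse_chain_0)
next
  case (insert x F)
  then have "coarse_chain n (f x + (\<lambda>A. \<Sum>i\<in>F. f i A))" by (intro coarse_chain_add) auto
  then show ?case using insert by (simp add: plus_fun_def)
qed

lemma supported_on_mono:
  assumes "supported_on n Y \<mu>" "Y \<subseteq> Y'"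
  shows "supported_on n Y' \<mu>"
  unfolding supported_on_def
proof (intro ballI impI)
  fix A assume A: "A \<in> bsets n" "A \<inter> cube n Y' = {}"
  then have "A \<inter> cube n Y = {}" using cube_mono[OF assms(2)] by blast
  then show "\<mu> A = 0" using assms(1) A(1) unfolding supported_on_def by blast
qed

lemma supported_on_add: "supported_on n Y \<mu> \<Longrightarrow> supported_on n Y \<nu> \<Longrightarrow> supported_on n Y (\<mu> + \<nu>)"
  unfolding supported_on_def by simp

lemma supported_on_cmult: "supported_on n Y \<mu> \<Longrightarrow> supported_on n Y (\<lambda>A. c * \<mu> A)"
  unfolding supported_on_def by simp

lemma locfin_measure_vanish_Int:
  assumes lf: "locfin_measure n \<mu>" and S: "S \<in> sets (cube_borel n)"
    and vanish_S: "\<forall>A\<in>bsets n. A \<inter> S = {} \<longrightarrow> \<mu> A = 0"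
    and vanish_T: "\<forall>A\<in>bsets n. A \<inter> T = {} \<longrightarrow> \<mu> A = 0"
  shows "\<forall>A\<in>bsets n. A \<inter> (S \<inter> T) = {} \<longrightarrow> \<mu> A = 0"
proof (intro ballI impI)
  fix A assume A: "A \<in> bsets n" "A \<inter> (S \<inter> T) = {}"
  have "\<mu> (A \<inter> S) = 0" using vanish_T bsets_Int[OF A(1) S] A(2) by blast
  moreover have "\<mu> (A - S) = 0" using vanish_S bsets_Diff[OF A(1) S] by blast
  ultimately show "\<mu> A = 0" using locfin_measure_split[OF lf A(1) S] by simp
qed

lemma supported_on_Int:
  assumes "locfin_measure n \<mu>" "Y1 \<in> sets borel" "supported_on n Y1 \<mu>" "supported_on n Y2 \<mu>"
  shows "supported_on n (Y1 \<inter> Y2) \<mu>"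
  using locfin_measure_vanish_Int[OF assms(1) sets_cube[OF assms(2)]] assms(3,4)
  unfolding supported_on_def cube_Int by blast

subsection \<open>Measurability in a proper space\<close>

lemma proper_compact_cball: "proper_metric_space TYPE('a::metric_space) \<Longrightarrow> compact (cball (x::'a) r)"
  unfolding proper_metric_space_def by blast

lemma proper_countable_dense:
  assumes "proper_metric_space TYPE('a)"
  obtains Q :: "'a::metric_space set" where "countable Q" "\<And>y e. e > 0 \<Longrightarrow> \<exists>q\<in>Q. dist y q < e"
proof -
  fix x0 :: 'a
  have "\<exists>C. finite C \<and> cball x0 (real k) \<subseteq> (\<Union>c\<in>C. ball c (inverse (real (Suc m))))" for k m
    using seq_compact_imp_totally_bounded[OF compact_imp_seq_compact[OF proper_compact_cball[OF assms]]]
    by (meson inverse_positive_iff_positive of_nat_0_less_iff zero_less_Suc)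
  then obtain C where C: "\<And>k m. finite (C k m)"
      "\<And>k m. cball x0 (real k) \<subseteq> (\<Union>c\<in>C k m. ball c (inverse (real (Suc m))))"
    by metis
  have "\<exists>q\<in>(\<Union>k m. C k m). dist y q < e" if "e > 0" for y e
  proof -
    obtain m where m: "inverse (real (Suc m)) < e" using reals_Archimedean[OF \<open>e > 0\<close>] by blast
    have "y \<in> cball x0 (real (nat \<lceil>dist x0 y\<rceil>))" by (simp add: real_nat_ceiling_ge)
    then obtain c where c: "c \<in> C (nat \<lceil>dist x0 y\<rceil>) m" "y \<in> ball c (inverse (real (Suc m)))"
      using C(2) by blast
    then have "dist y c < e" using m by (simp add: dist_commute)
    then show ?thesis using c(1) by blast
  qed
  moreover have "countable (\<Union>k m. C k m)" using C(1) by (simp add: countable_finite)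
  ultimately show ?thesis using that by blast
qed

lemma le_of_le_plus_inverse_Suc:
  fixes d s c :: real
  assumes "\<And>k. d \<le> s + c * inverse (real (Suc k))"
  shows "d \<le> s"
proof (rule LIMSEQ_le_const)
  show "(\<lambda>k. s + c * inverse (real (Suc k))) \<longlonglongrightarrow> s"
    using tendsto_add[OF tendsto_const tendsto_mult_right_zero[OF LIMSEQ_inverse_real_of_nat, of c]]
    by simp
qed (use assms in auto)

text \<open>Without second countability the Borel sets of a product may exceed the product
  \<open>\<sigma>\<close>-algebra, so continuity of \<open>dist\<close> does not give measurability; a countable dense set does.\<close>
lemma sets_dist_le:
  fixes f g :: "'b \<Rightarrow> 'a::metric_space" and Q :: "'a set"
  assumes Q: "countable Q" "\<And>y e. e > 0 \<Longrightarrow> \<exists>q\<in>Q. dist y q < e"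
    and f: "f \<in> borel_measurable M" and g: "g \<in> borel_measurable M"
  shows "{x\<in>space M. dist (f x) (g x) \<le> s} \<in> sets M"
proof -
  define T :: "nat \<Rightarrow> 'a \<Rightarrow> 'b set" where "T k q = (f -` ball q (inverse (real (Suc k))) \<inter> space M) \<inter>
       (g -` cball q (s + inverse (real (Suc k))) \<inter> space M)" for k q
  have T: "T k q \<in> sets M" for k q
    unfolding T_def by (intro sets.Int measurable_sets[OF f] measurable_sets[OF g] borel_open borel_closed) auto
  have "{x\<in>space M. dist (f x) (g x) \<le> s} = (\<Inter>k. \<Union>q\<in>Q. T k q)"
  proof (intro equalityI subsetI)
    fix x assume x: "x \<in> {x\<in>space M. dist (f x) (g x) \<le> s}"
    show "x \<in> (\<Inter>k. \<Union>q\<in>Q. T k q)"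
    proof
      fix k :: nat
      obtain q where q: "q \<in> Q" "dist (f x) q < inverse (real (Suc k))"
        using Q(2)[of "inverse (real (Suc k))"] by auto
      moreover have "dist q (g x) \<le> dist q (f x) + dist (f x) (g x)" by (rule dist_triangle)
      ultimately have "x \<in> T k q" using x by (auto simp: T_def dist_commute)
      then show "x \<in> (\<Union>q\<in>Q. T k q)" using q by blast
    qed
  next
    fix x assume x: "x \<in> (\<Inter>k. \<Union>q\<in>Q. T k q)"
    have "dist (f x) (g x) \<le> s + 2 * inverse (real (Suc k))" for k
    proof -
      obtain q where "x \<in> T k q" using x by blast
      then show ?thesis using dist_triangle3[of "f x" "g x" q] by (auto simp: T_def)
    qed
    then have "dist (f x) (g x) \<le> s" by (rule le_of_le_plus_inverse_Suc)
    then show "x \<in> {x\<in>space M. dist (f x) (g x) \<le> s}" using x by (auto simp: T_def)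
  qed
  also have "\<dots> \<in> sets M"
    using sets.countable_UN''[OF Q(1) T] by (intro sets.countable_INT) auto
  finally show ?thesis .
qed

definition close_tuples :: "nat \<Rightarrow> real \<Rightarrow> (nat \<Rightarrow> 'a::metric_space) set" where
  "close_tuples n s = {x \<in> cube n UNIV. \<forall>i\<le>n. \<forall>j\<le>n. dist (x i) (x j) \<le> s}"

lemma sets_close_tuples:
  assumes "proper_metric_space TYPE('a::metric_space)"
  shows "(close_tuples n s :: (nat \<Rightarrow> 'a) set) \<in> sets (cube_borel n)"
proof -
  obtain Q :: "'a set" where Q: "countable Q" "\<And>y e. e > 0 \<Longrightarrow> \<exists>q\<in>Q. dist y q < e"
    using proper_countable_dense[OF assms] by blast
  have "(close_tuples n s :: (nat \<Rightarrow> 'a) set) =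
      (\<Inter>i\<in>{..n}. \<Inter>j\<in>{..n}. {x\<in>space (cube_borel n). dist (x i) (x j) \<le> s})"
    unfolding close_tuples_def space_cube_borel by auto
  also have "\<dots> \<in> sets (cube_borel n)"
    by (intro sets.finite_INT sets_dist_le[OF Q] measurable_component_singleton) auto
  finally show ?thesis .
qed

lemma closedin_close_tuples: "closedin (prod_top n) (close_tuples n s :: (nat \<Rightarrow> 'a::metric_space) set)"
proof -
  have "continuous_map (prod_top n) euclideanreal (\<lambda>x::nat \<Rightarrow> 'a. dist (x i) (x j))" if "i \<le> n" "j \<le> n" for i j
  proof -
    have pair: "continuous_map (prod_top n) (prod_topology euclidean euclidean) (\<lambda>x::nat \<Rightarrow> 'a. (x i, x j))"
      using that unfolding prod_top_def by (intro continuous_map_pairedI continuous_map_product_projection) auto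
    have dist: "continuous_map (prod_topology euclidean euclidean) euclideanreal (\<lambda>p::'a \<times> 'a. dist (fst p) (snd p))"
      by (simp add: euclidean_product_topology continuous_on_dist continuous_on_fst continuous_on_snd continuous_on_id)
    show ?thesis using continuous_map_compose[OF pair dist] by (simp add: o_def)
  qed
  then have "closedin (prod_top n) {x::nat \<Rightarrow> 'a. x \<in> topspace (prod_top n) \<and> dist (x i) (x j) \<in> {..s}}"
    if "i \<le> n" "j \<le> n" for i j
    using that by (intro closedin_continuous_map_preimage) auto
  moreover have "close_tuples n s =
      (\<Inter>i\<in>{..n}. \<Inter>j\<in>{..n}. {x::nat \<Rightarrow> 'a. x \<in> topspace (prod_top n) \<and> dist (x i) (x j) \<in> {..s}})"
    unfolding close_tuples_def topspace_prod_top by auto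
  ultimately show ?thesis by (auto intro: closedin_INT)
qed

lemma diag_thick_subset_close_tuples: "diag_thick n R \<subseteq> close_tuples n (2 * R)"
proof
  fix x assume "x \<in> diag_thick n R"
  then obtain y where x: "x \<in> cube n UNIV" "\<And>i. i \<le> n \<Longrightarrow> dist (x i) y \<le> R"
    unfolding diag_thick_def by blast
  have "dist (x i) (x j) \<le> 2 * R" if "i \<le> n" "j \<le> n" for i j
    using dist_triangle3[of "x i" "x j" y] x(2)[OF that(1)] x(2)[OF that(2)] by (simp add: dist_commute)
  then show "x \<in> close_tuples n (2 * R)" using x(1) unfolding close_tuples_def by blast
qed

lemma proper_center_of_approx_centers:
  fixes x :: "nat \<Rightarrow> 'a::metric_space"
  assumes P: "proper_metric_space TYPE('a::metric_space)"
    and q: "\<And>k i. i \<le> n \<Longrightarrow> dist (q k) (x i) \<le> R + inverse (real (Suc k))"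
  shows "\<exists>y::'a. \<forall>i\<le>n. dist (x i) y \<le> R"
proof -
  have "q k \<in> cball (x 0) (R + 1)" for k
    using q[of 0 k] inverse_le_1_iff[of "real (Suc k)"] by (simp add: dist_commute)
  then obtain l r where r: "strict_mono r" "(q \<circ> r) \<longlonglongrightarrow> l"
    using compact_imp_seq_compact[OF proper_compact_cball[OF P]] by (metis seq_compactE)
  have "dist l (x i) \<le> R + 0" if "i \<le> n" for i
  proof (rule LIMSEQ_le)
    show "(\<lambda>k. dist ((q \<circ> r) k) (x i)) \<longlonglongrightarrow> dist l (x i)"
      by (intro tendsto_dist r(2) tendsto_const)
    show "(\<lambda>k. R + inverse (real (Suc (r k)))) \<longlonglongrightarrow> R + 0"
      using LIMSEQ_subseq_LIMSEQ[OF LIMSEQ_inverse_real_of_nat r(1)]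
      by (intro tendsto_add tendsto_const) (simp add: o_def)
  qed (use q that in auto)
  then show ?thesis by (auto simp: dist_commute)
qed

lemma sets_diag_thick:
  assumes P: "proper_metric_space TYPE('a::metric_space)"
  shows "(diag_thick n R :: (nat \<Rightarrow> 'a) set) \<in> sets (cube_borel n)"
proof -
  obtain Q :: "'a set" where Q: "countable Q" "\<And>y e. e > 0 \<Longrightarrow> \<exists>q\<in>Q. dist y q < e"
    using proper_countable_dense[OF P] by blast
  define T :: "nat \<Rightarrow> 'a \<Rightarrow> (nat \<Rightarrow> 'a) set"
    where "T k q = cube n (cball q (R + inverse (real (Suc k))))" for k q
  have "diag_thick n R = (\<Inter>k. \<Union>q\<in>Q. T k q)"
  proof (intro equalityI subsetI)
    fix x :: "nat \<Rightarrow> 'a" assume "x \<in> diag_thick n R"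
    then obtain y where x: "x \<in> cube n UNIV" "\<And>i. i \<le> n \<Longrightarrow> dist (x i) y \<le> R"
      unfolding diag_thick_def by blast
    show "x \<in> (\<Inter>k. \<Union>q\<in>Q. T k q)"
    proof
      fix k :: nat
      obtain q where q: "q \<in> Q" "dist y q < inverse (real (Suc k))"
        using Q(2)[of "inverse (real (Suc k))"] by auto
      have "dist q (x i) \<le> R + inverse (real (Suc k))" if "i \<le> n" for i
        using dist_triangle[of q "x i" y] x(2)[OF that] q(2) by (simp add: dist_commute)
      then have "x \<in> T k q" using x(1) by (auto simp: T_def mem_cube_iff)
      then show "x \<in> (\<Union>q\<in>Q. T k q)" using q by blast
    qed
  next
    fix x :: "nat \<Rightarrow> 'a" assume "x \<in> (\<Inter>k. \<Union>q\<in>Q. T k q)"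
    then have "\<forall>k. \<exists>q. x \<in> T k q" by blast
    then obtain q where q: "\<And>k. x \<in> T k (q k)" by metis
    then have "x \<in> cube n UNIV" by (auto simp: T_def mem_cube_iff)
    moreover have "\<exists>y. \<forall>i\<le>n. dist (x i) y \<le> R"
      using q by (intro proper_center_of_approx_centers[OF P]) (auto simp: T_def mem_cube_iff)
    ultimately show "x \<in> diag_thick n R" unfolding diag_thick_def by blast
  qed
  also have "\<dots> \<in> sets (cube_borel n)"
    using sets.countable_UN''[OF Q(1), of "T k" "cube_borel n" for k]
    by (intro sets.countable_INT) (auto simp: T_def sets_cube)
  finally show ?thesis .
qed

subsection \<open>Face maps and the boundary\<close>

lemma measurable_omit:
  "omit n i \<in> measurable (cube_borel (Suc n)) (cube_borel n :: (nat \<Rightarrow> 'a::metric_space) measure)"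
proof -
  have "(\<lambda>x j. if j \<le> n then (if j < i then x j else x (Suc j)) else undefined)
        \<in> measurable (cube_borel (Suc n)) (cube_borel n :: (nat \<Rightarrow> 'a) measure)"
  proof (rule measurable_PiM_single')
    fix j assume "j \<in> {..n}"
    then show "(\<lambda>x::nat \<Rightarrow> 'a. if j \<le> n then (if j < i then x j else x (Suc j)) else undefined)
        \<in> borel_measurable (cube_borel (Suc n))"
      by (cases "j < i") (auto intro!: measurable_component_singleton)
  qed (auto simp: space_PiM PiE_iff extensional_def)
  then show ?thesis by (simp add: omit_def[abs_def])
qed

lemma continuous_map_omit: "continuous_map (prod_top (Suc n)) (prod_top n) (omit n i)"
  unfolding prod_top_def continuous_map_componentwise
proof (intro conjI ballI)
  show "omit n i ` topspace (product_topology (\<lambda>_. euclidean) {..Suc n}) \<subseteq> extensional {..n}"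
    by (auto simp: omit_def extensional_def)
  fix k assume "k \<in> {..n}"
  then show "continuous_map (product_topology (\<lambda>_. euclidean) {..Suc n}) euclidean (\<lambda>x. omit n i x k)"
    by (cases "k < i") (auto simp: omit_def intro!: continuous_map_product_projection)
qed

lemma omit_cube: "x \<in> cube (Suc n) Y \<Longrightarrow> omit n i x \<in> cube n Y"
  by (auto simp: mem_cube_iff omit_def extensional_def)

lemma omit_diag_thick:
  assumes "x \<in> diag_thick (Suc n) R"
  shows "omit n i x \<in> diag_thick n R"
proof -
  obtain y where x: "x \<in> cube (Suc n) UNIV" "\<And>k. k \<le> Suc n \<Longrightarrow> dist (x k) y \<le> R"
    using assms unfolding diag_thick_def by blast
  have "dist (omit n i x j) y \<le> R" if "j \<le> n" for j
    using that x(2)[of j] x(2)[of "Suc j"] by (auto simp: omit_def)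
  then show ?thesis using omit_cube[OF x(1)] unfolding diag_thick_def by blast
qed

lemma close_tuples_omit_cube:
  assumes x: "x \<in> close_tuples (Suc n) s" and "omit n i x \<in> cube n (cball x0 r)"
  shows "x \<in> cube (Suc n) (cball x0 (r + s))"
proof -
  define k where "k = (if i = 0 then 1 else 0 :: nat)"
  have "omit n i x 0 = x k" by (simp add: omit_def k_def)
  moreover have "omit n i x 0 \<in> cball x0 r" using assms(2) by (simp add: mem_cube_iff)
  ultimately have "dist x0 (x k) \<le> r" by simp
  moreover have "dist (x k) (x l) \<le> s" if "l \<le> Suc n" for l
    using x that unfolding close_tuples_def k_def by auto
  ultimately have "dist x0 (x l) \<le> r + s" if "l \<le> Suc n" for l
    using dist_triangle[of x0 "x l" "x k"] that by fastforce
  then show ?thesis using x unfolding close_tuples_def by (auto simp: mem_cube_iff)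
qed

lemma vimage_omit_bsets:
  assumes A: "A \<in> bsets n"
    and D: "D \<in> sets (cube_borel (Suc n))" "D \<subseteq> close_tuples (Suc n) s"
  shows "omit n i -` A \<inter> D \<in> bsets (Suc n)"
proof -
  obtain x0 r where "A \<subseteq> cube n (cball x0 r)" using A by (auto simp: bsets_iff)
  then have "omit n i -` A \<inter> D \<subseteq> cube (Suc n) (cball x0 (r + s))"
    using D(2) close_tuples_omit_cube by blast
  moreover have "omit n i -` A \<inter> D = (omit n i -` A \<inter> space (cube_borel (Suc n))) \<inter> D"
    using sets.sets_into_space[OF D(1)] by blast
  moreover have "\<dots> \<in> sets (cube_borel (Suc n))"
    by (intro sets.Int measurable_sets[OF measurable_omit] bsets_sets A D(1))
  ultimately show ?thesis by (auto simp: bsets_iff)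
qed

lemma compactin_cube_cball:
  assumes "proper_metric_space TYPE('a::metric_space)"
  shows "compactin (prod_top n) (cube n (cball (x0::'a) r))"
  using proper_compact_cball[OF assms, of x0 r] unfolding prod_top_def cube_def by (simp add: compactin_PiE)

lemma openin_cube_ball: "openin (prod_top n) (cube n (ball x0 r))"
  unfolding prod_top_def cube_def by (simp add: openin_PiE_gen)

lemma Hausdorff_space_prod_top: "Hausdorff_space (prod_top n :: (nat \<Rightarrow> 'a::metric_space) topology)"
  unfolding prod_top_def by (simp add: Hausdorff_space_product_topology)

lemma closedin_omit_image:
  assumes P: "proper_metric_space TYPE('a::metric_space)" and U': "openin (prod_top (Suc n)) U'"
  shows "closedin (prod_top n) (omit n i ` (close_tuples (Suc n) s \<inter> cube (Suc n) (cball (x0::'a) t) - U'))"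
proof -
  have box: "compactin (prod_top (Suc n)) (cube (Suc n) (cball x0 t))" by (rule compactin_cube_cball[OF P])
  have "compactin (prod_top (Suc n)) (close_tuples (Suc n) s \<inter> cube (Suc n) (cball x0 t) - U')"
    using closedin_close_tuples compactin_imp_closedin[OF Hausdorff_space_prod_top box] U'
    by (intro closed_compactin[OF box]) auto
  then show ?thesis
    by (rule compactin_imp_closedin[OF Hausdorff_space_prod_top image_compactin[OF _ continuous_map_omit]])
qed

text \<open>Pull the regularity data of \<open>A\<close> back to the \<open>s\<close>-close tuples, on which face maps are
  proper: what a compact box around them leaves outside \<open>U'\<close> projects to a closed set \<open>G\<close>, and
  a neighbourhood of \<open>A\<close> minus \<open>G\<close> is the required open set.\<close>
lemma omit_vimage_regular:
  assumes P: "proper_metric_space TYPE('a::metric_space)"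
    and lf: "locfin_measure (Suc n) (\<mu> :: 'a chain_measure)"
    and D: "D \<in> sets (cube_borel (Suc n))" "D \<subseteq> close_tuples (Suc n) s"
    and A: "A \<in> bsets n" and e: "e > 0"
  shows "regular_at n (\<lambda>B. \<mu> (omit n i -` B \<inter> D)) A e"
proof -
  obtain x0 r where Ar: "A \<subseteq> cube n (cball x0 r)" using A by (auto simp: bsets_iff)
  define E :: "(nat \<Rightarrow> 'a) set" where "E = close_tuples (Suc n) s"
  have "omit n i -` A \<inter> E \<in> bsets (Suc n)"
    unfolding E_def by (rule vimage_omit_bsets[OF A sets_close_tuples[OF P] order_refl])
  then have "regular_at (Suc n) \<mu> (omit n i -` A \<inter> E) e" using locfin_measure_regular[OF lf _ e] by blast
  then obtain K' U' where KU': "compactin (prod_top (Suc n)) K'" "openin (prod_top (Suc n)) U'"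
      "K' \<subseteq> omit n i -` A \<inter> E" "omit n i -` A \<inter> E \<subseteq> U'"
      "\<And>B. B \<in> bsets (Suc n) \<Longrightarrow> B \<subseteq> U' - K' \<Longrightarrow> cmod (\<mu> B) < e"
    by (elim regular_atE) blast
  define box where "box = cube (Suc n) (cball x0 (r + 1 + s))"
  define G where "G = omit n i ` (E \<inter> box - U')"
  have G: "closedin (prod_top n) G"
    unfolding G_def E_def box_def by (rule closedin_omit_image[OF P KU'(2)])
  define U where "U = cube n (ball x0 (r + 1)) - G"
  have "cball x0 r \<subseteq> ball x0 (r + 1)" by auto
  then have near: "A \<subseteq> cube n (ball x0 (r + 1))" using Ar cube_mono by blast
  have A_U: "A \<subseteq> U" using near KU'(4) unfolding U_def G_def by blast
  have pulled_back: "omit n i -` B \<inter> D \<subseteq> U' - K'" if "B \<subseteq> U - omit n i ` K'" for B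
  proof
    fix x assume x: "x \<in> omit n i -` B \<inter> D"
    then have "x \<in> E" "omit n i x \<in> U" "omit n i x \<notin> omit n i ` K'" using D(2) that by (auto simp: E_def)
    moreover have "omit n i x \<in> cube n (cball x0 (r + 1))"
      using \<open>omit n i x \<in> U\<close> cube_mono[OF ball_subset_cball] unfolding U_def by blast
    then have "x \<in> box" using close_tuples_omit_cube \<open>x \<in> E\<close> unfolding E_def box_def by blast
    ultimately show "x \<in> U' - K'" unfolding U_def G_def by blast
  qed
  show ?thesis
  proof (rule regular_atI[OF image_compactin[OF KU'(1) continuous_map_omit]])
    show "openin (prod_top n) U" unfolding U_def by (rule openin_diff[OF openin_cube_ball G])
    show "omit n i ` K' \<subseteq> A" using KU'(3) by blast
    fix B assume "B \<in> bsets n" "B \<subseteq> U - omit n i ` K'"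
    then show "cmod (\<mu> (omit n i -` B \<inter> D)) < e"
      using KU'(5)[OF vimage_omit_bsets[OF _ D] pulled_back] by blast
  qed (rule A_U)
qed

lemma supp_in_diag_restrict:
  assumes P: "proper_metric_space TYPE('a::metric_space)"
    and lf: "locfin_measure m (\<mu> :: 'a chain_measure)" and s: "supp_in_diag m R \<mu>"
    and X: "X \<in> bsets m"
  shows "\<mu> X = \<mu> (X \<inter> diag_thick m R)"
proof -
  have "\<mu> (X - diag_thick m R) = 0"
    using s bsets_Diff[OF X sets_diag_thick[OF P]] unfolding supp_in_diag_def by blast
  then show ?thesis using locfin_measure_split[OF lf X sets_diag_thick[OF P, of m R]] by simp
qed

text \<open>The radius picked by \<open>SOME\<close> in \<^const>\<open>pushfwd\<close> is irrelevant.\<close>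
lemma pushfwd_eq:
  assumes P: "proper_metric_space TYPE('a::metric_space)"
    and lf: "locfin_measure (Suc n) (\<mu> :: 'a chain_measure)"
    and s: "supp_in_diag (Suc n) R \<mu>"
  shows "pushfwd n i \<mu> A = (if A \<in> bsets n then \<mu> (omit n i -` A \<inter> diag_thick (Suc n) R) else 0)"
proof (cases "A \<in> bsets n")
  case True
  let ?V = "\<lambda>R. omit n i -` A \<inter> diag_thick (Suc n) R"
  have indep: "\<mu> (?V R1) = \<mu> (?V R2)" if "supp_in_diag (Suc n) R1 \<mu>" "supp_in_diag (Suc n) R2 \<mu>" for R1 R2
  proof -
    have V: "?V (max R1 R2) \<in> bsets (Suc n)"
      by (rule vimage_omit_bsets[OF True sets_diag_thick[OF P] diag_thick_subset_close_tuples])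
    have eq: "\<mu> (?V (max R1 R2)) = \<mu> (?V R)" if "supp_in_diag (Suc n) R \<mu>" "R \<le> max R1 R2" for R
    proof -
      have "?V (max R1 R2) \<inter> diag_thick (Suc n) R = ?V R" using diag_thick_mono[OF that(2)] by blast
      then show ?thesis using supp_in_diag_restrict[OF P lf that(1) V] by simp
    qed
    show ?thesis using eq[OF that(1) max.cobounded1] eq[OF that(2) max.cobounded2] by simp
  qed
  show ?thesis
    using True indep[OF someI[of "\<lambda>R. supp_in_diag (Suc n) R \<mu>", OF s] s] by (simp add: pushfwd_def)
qed (simp add: pushfwd_def)

lemma pushfwd_add:
  assumes P: "proper_metric_space TYPE('a::metric_space)"
    and "coarse_chain (Suc n) (\<mu> :: 'a chain_measure)" "coarse_chain (Suc n) \<nu>"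
  shows "pushfwd n i (\<mu> + \<nu>) = pushfwd n i \<mu> + pushfwd n i \<nu>"
proof -
  obtain R where s: "supp_in_diag (Suc n) R \<mu>" "supp_in_diag (Suc n) R \<nu>"
    using assms(2,3) by (rule coarse_chain_common_radius)
  then have "supp_in_diag (Suc n) R (\<mu> + \<nu>)" unfolding supp_in_diag_def by simp
  moreover have lf: "locfin_measure (Suc n) \<mu>" "locfin_measure (Suc n) \<nu>"
    using assms(2,3) by (auto elim: coarse_chainE)
  ultimately show ?thesis
    by (simp add: fun_eq_iff pushfwd_eq[OF P _ s(1)] pushfwd_eq[OF P _ s(2)]
        pushfwd_eq[OF P locfin_measure_add[OF lf]])
qed

lemma pushfwd_cmult:
  assumes P: "proper_metric_space TYPE('a::metric_space)"
    and "coarse_chain (Suc n) (\<mu> :: 'a chain_measure)"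
  shows "pushfwd n i (\<lambda>A. c * \<mu> A) = (\<lambda>A. c * pushfwd n i \<mu> A)"
proof -
  obtain R where lf: "locfin_measure (Suc n) \<mu>" and s: "supp_in_diag (Suc n) R \<mu>"
    using assms(2) by (rule coarse_chainE)
  then have "supp_in_diag (Suc n) R (\<lambda>A. c * \<mu> A)" unfolding supp_in_diag_def by simp
  then show ?thesis
    by (simp add: fun_eq_iff pushfwd_eq[OF P lf s] pushfwd_eq[OF P locfin_measure_cmult[OF lf]])
qed

lemma pushfwd_0: "pushfwd n i (\<lambda>A. 0) = (\<lambda>A. 0)"
  by (simp add: pushfwd_def fun_eq_iff)

lemma supported_on_pushfwd:
  assumes lf: "locfin_measure (Suc n) \<mu>" and s: "supported_on (Suc n) Y \<mu>"
  shows "supported_on n Y (pushfwd n i \<mu>)"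
  unfolding supported_on_def
proof (intro ballI impI)
  fix A assume A: "A \<in> bsets n" "A \<inter> cube n Y = {}"
  define X where "X = omit n i -` A \<inter> diag_thick (Suc n) (SOME R. supp_in_diag (Suc n) R \<mu>)"
  have "X \<inter> cube (Suc n) Y = {}" unfolding X_def using A(2) omit_cube by blast
  then have "\<mu> X = 0" using s locfin_measure_outside[OF lf] unfolding supported_on_def by blast
  then show "pushfwd n i \<mu> A = 0" using A(1) unfolding pushfwd_def X_def by simp
qed

lemma coarse_chain_pushfwd:
  assumes P: "proper_metric_space TYPE('a::metric_space)"
    and "coarse_chain (Suc n) (\<mu> :: 'a chain_measure)"
  shows "coarse_chain n (pushfwd n i \<mu>)"
proof -
  obtain R where lf: "locfin_measure (Suc n) \<mu>" and s: "supp_in_diag (Suc n) R \<mu>"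
    using assms(2) by (rule coarse_chainE)
  let ?D = "diag_thick (Suc n) R :: (nat \<Rightarrow> 'a) set"
  have D: "?D \<in> sets (cube_borel (Suc n))" "?D \<subseteq> close_tuples (Suc n) (2 * R)"
    by (rule sets_diag_thick[OF P]) (rule diag_thick_subset_close_tuples)
  have pf: "pushfwd n i \<mu> = (\<lambda>A. if A \<in> bsets n then \<mu> (omit n i -` A \<inter> ?D) else 0)"
    using pushfwd_eq[OF P lf s] by blast
  have "locfin_measure n (pushfwd n i \<mu>)"
    unfolding pf using vimage_omit_bsets[OF _ D] omit_vimage_regular[OF P lf D]
    by (rule locfin_measure_vimage_Int[OF lf])
  moreover have "supp_in_diag n R (pushfwd n i \<mu>)"
    unfolding supp_in_diag_def
  proof (intro ballI impI)
    fix A :: "(nat \<Rightarrow> 'a) set" assume A: "A \<in> bsets n" "A \<inter> diag_thick n R = {}"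
    then have "omit n i -` A \<inter> ?D = {}" using omit_diag_thick by blast
    then show "pushfwd n i \<mu> A = 0" using A(1) locfin_measure_empty[OF lf] by (simp add: pf)
  qed
  ultimately show ?thesis unfolding coarse_chain_def by blast
qed

lemma bd_add:
  assumes "proper_metric_space TYPE('a::metric_space)"
    and "coarse_chain n (\<mu> :: 'a chain_measure)" "coarse_chain n \<nu>"
  shows "bd n (\<mu> + \<nu>) = bd n \<mu> + bd n \<nu>"
  using assms by (cases n) (simp_all add: fun_eq_iff pushfwd_add sum.distrib ring_distribs)

lemma bd_cmult:
  assumes "proper_metric_space TYPE('a::metric_space)"
    and "coarse_chain n (\<mu> :: 'a chain_measure)"
  shows "bd n (\<lambda>A. c * \<mu> A) = (\<lambda>A. c * bd n \<mu> A)"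
  using assms
  by (cases n) (simp_all add: fun_eq_iff pushfwd_cmult sum_distrib_left mult.left_commute right_diff_distrib)

lemma bd_uminus:
  assumes "proper_metric_space TYPE('a::metric_space)"
    and "coarse_chain n (\<mu> :: 'a chain_measure)"
  shows "bd n (- \<mu>) = - bd n \<mu>"
  unfolding uminus_eq_cmult by (rule bd_cmult[OF assms])

lemma bd_0: "bd n (\<lambda>A. 0) = (\<lambda>A. 0)"
  by (cases n) (simp_all add: pushfwd_0 fun_eq_iff)

lemma supported_on_bd:
  assumes "locfin_measure n \<mu>" "supported_on n Y \<mu>"
  shows "supported_on (n - 1) Y (bd n \<mu>)"
proof (cases n)
  case 0
  then show ?thesis by (simp add: supported_on_def)
next
  case (Suc k)
  then have "supported_on k Y (pushfwd k i \<mu>)" for i using supported_on_pushfwd assms by blast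
  then show ?thesis unfolding Suc supported_on_def by simp
qed

lemma coarse_chain_bd:
  assumes "proper_metric_space TYPE('a::metric_space)"
    and "coarse_chain n (\<mu> :: 'a chain_measure)"
  shows "coarse_chain (n - 1) (bd n \<mu>)"
proof (cases n)
  case 0
  then show ?thesis by (simp add: coarse_chain_0)
next
  case (Suc k)
  have "coarse_chain k (\<lambda>A. \<Sum>i\<le>Suc k. (-1) ^ i * pushfwd k i \<mu> A)"
    using assms unfolding Suc by (intro coarse_chain_sum coarse_chain_cmult coarse_chain_pushfwd) auto
  then show ?thesis unfolding Suc by (simp only: bd.simps diff_Suc_1)
qed

subsection \<open>Chains supported on a family\<close>

definition set_ideal :: "'a set set \<Rightarrow> bool" where
  "set_ideal \<Y> \<longleftrightarrow>
     {} \<in> \<Y> \<and> (\<forall>Y\<in>\<Y>. \<forall>Y'\<in>\<Y>. Y \<union> Y' \<in> \<Y>) \<and> (\<forall>Y\<in>\<Y>. \<forall>Y'. Y' \<subseteq> Y \<longrightarrow> Y' \<in> \<Y>)"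

lemma set_idealI:
  assumes "{} \<in> \<Y>" "\<And>Y Y'. Y \<in> \<Y> \<Longrightarrow> Y' \<in> \<Y> \<Longrightarrow> Y \<union> Y' \<in> \<Y>"
    "\<And>Y Y'. Y \<in> \<Y> \<Longrightarrow> Y' \<subseteq> Y \<Longrightarrow> Y' \<in> \<Y>"
  shows "set_ideal \<Y>"
  unfolding set_ideal_def using assms by blast

lemma set_ideal_empty: "set_ideal \<Y> \<Longrightarrow> {} \<in> \<Y>"
  unfolding set_ideal_def by blast

lemma set_ideal_Un: "set_ideal \<Y> \<Longrightarrow> Y \<in> \<Y> \<Longrightarrow> Y' \<in> \<Y> \<Longrightarrow> Y \<union> Y' \<in> \<Y>"
  unfolding set_ideal_def by blast

lemma set_ideal_subset: "set_ideal \<Y> \<Longrightarrow> Y \<in> \<Y> \<Longrightarrow> Y' \<subseteq> Y \<Longrightarrow> Y' \<in> \<Y>"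
  unfolding set_ideal_def by blast

lemma big_family_set_ideal: "big_family \<Y> \<Longrightarrow> set_ideal \<Y>"
  unfolding big_family_def set_ideal_def by blast

lemma big_family_thick: "big_family \<Y> \<Longrightarrow> Y \<in> \<Y> \<Longrightarrow> thick R Y \<in> \<Y>"
  unfolding big_family_def by blast

lemma thick_0_eq_closure: "thick 0 Y = closure Y"
proof (cases "Y = {}")
  case False
  have "infdist x Y \<le> 0 \<longleftrightarrow> infdist x Y = 0" for x using infdist_nonneg[of x Y] by linarith
  then show ?thesis using in_closure_iff_infdist_zero[OF False] False by (auto simp: thick_def)
qed (simp add: thick_def)

lemma big_family_closure: "big_family \<Y> \<Longrightarrow> Y \<in> \<Y> \<Longrightarrow> closure Y \<in> \<Y>"
  using big_family_thick[of \<Y> Y 0] by (simp add: thick_0_eq_closure)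

lemma mem_fam_cap_iff: "set_ideal \<X> \<Longrightarrow> set_ideal \<Z> \<Longrightarrow> Y \<in> fam_cap \<X> \<Z> \<longleftrightarrow> Y \<in> \<X> \<and> Y \<in> \<Z>"
  unfolding fam_cap_def by (blast intro: set_ideal_subset)

lemma set_ideal_fam_cap: "set_ideal \<X> \<Longrightarrow> set_ideal \<Z> \<Longrightarrow> set_ideal (fam_cap \<X> \<Z>)"
  by (rule set_idealI) (auto simp: mem_fam_cap_iff intro: set_ideal_empty set_ideal_Un set_ideal_subset)

lemma set_ideal_fam_cup:
  assumes "set_ideal \<X>" "set_ideal \<W>"
  shows "set_ideal (fam_cup \<X> \<W>)"
proof (rule set_idealI)
  show "{} \<in> fam_cup \<X> \<W>"
    using assms set_ideal_empty unfolding fam_cup_def by fastforce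
next
  fix Y Y' assume "Y \<in> fam_cup \<X> \<W>" "Y' \<in> fam_cup \<X> \<W>"
  then obtain X1 W1 X2 W2 where "Y = X1 \<union> W1" "Y' = X2 \<union> W2" "X1 \<in> \<X>" "X2 \<in> \<X>" "W1 \<in> \<W>" "W2 \<in> \<W>"
    unfolding fam_cup_def by blast
  moreover have "X1 \<union> X2 \<in> \<X>" "W1 \<union> W2 \<in> \<W>" using calculation assms set_ideal_Un by auto
  moreover have "Y \<union> Y' = (X1 \<union> X2) \<union> (W1 \<union> W2)" using calculation by blast
  ultimately show "Y \<union> Y' \<in> fam_cup \<X> \<W>" unfolding fam_cup_def by blast
next
  fix Y Y' assume "Y \<in> fam_cup \<X> \<W>" "Y' \<subseteq> Y"
  then obtain X1 W1 where "Y = X1 \<union> W1" "X1 \<in> \<X>" "W1 \<in> \<W>" unfolding fam_cup_def by blast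
  moreover have "Y' \<inter> X1 \<in> \<X>" "Y' \<inter> W1 \<in> \<W>" using calculation assms set_ideal_subset by blast+
  moreover have "Y' = (Y' \<inter> X1) \<union> (Y' \<inter> W1)" using calculation \<open>Y' \<subseteq> Y\<close> by blast
  ultimately show "Y' \<in> fam_cup \<X> \<W>" unfolding fam_cup_def by blast
qed

lemma fam_cup_subset_left:
  assumes "set_ideal \<W>" shows "\<X> \<subseteq> fam_cup \<X> \<W>"
proof
  fix X assume "X \<in> \<X>"
  moreover have "X = X \<union> {}" by simp
  ultimately show "X \<in> fam_cup \<X> \<W>" unfolding fam_cup_def using set_ideal_empty[OF assms] by blast
qed

lemma fam_cup_subset_right:
  assumes "set_ideal \<X>" shows "\<W> \<subseteq> fam_cup \<X> \<W>"
proof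
  fix W assume "W \<in> \<W>"
  moreover have "W = {} \<union> W" by simp
  ultimately show "W \<in> fam_cup \<X> \<W>" unfolding fam_cup_def using set_ideal_empty[OF assms] by blast
qed

lemma fam_cap_fam_cup_subset:
  assumes X: "set_ideal \<X>" and Z: "set_ideal \<Z>"
    and h: "fam_cap \<X> \<W> \<subseteq> fam_cap \<X> \<Z>"
  shows "fam_cap \<X> (fam_cup (fam_cap \<X> \<Z>) \<W>) \<subseteq> fam_cap \<X> \<Z>"
proof
  fix Y assume "Y \<in> fam_cap \<X> (fam_cup (fam_cap \<X> \<Z>) \<W>)"
  then obtain X1 V W1 where Y: "Y = X1 \<inter> (V \<union> W1)" "X1 \<in> \<X>" "V \<in> fam_cap \<X> \<Z>" "W1 \<in> \<W>"
    unfolding fam_cap_def fam_cup_def by blast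
  have "X1 \<inter> W1 \<in> fam_cap \<X> \<Z>" using h Y(2,4) unfolding fam_cap_def by blast
  then have "V \<union> (X1 \<inter> W1) \<in> fam_cap \<X> \<Z>" using Y(3) set_ideal_Un set_ideal_fam_cap[OF X Z] by blast
  moreover have "Y \<subseteq> V \<union> (X1 \<inter> W1)" using Y(1) by blast
  ultimately show "Y \<in> fam_cap \<X> \<Z>" using set_ideal_subset set_ideal_fam_cap[OF X Z] by blast
qed

lemma CX_I: "coarse_chain n \<mu> \<Longrightarrow> Y \<in> \<Y> \<Longrightarrow> supported_on n Y \<mu> \<Longrightarrow> \<mu> \<in> CX n \<Y>"
  unfolding CX_def by blast

lemma CX_E:
  assumes "\<mu> \<in> CX n \<Y>"
  obtains Y where "coarse_chain n \<mu>" "Y \<in> \<Y>" "supported_on n Y \<mu>"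
  using assms unfolding CX_def by blast

lemma CX_coarse_chain: "\<mu> \<in> CX n \<Y> \<Longrightarrow> coarse_chain n \<mu>"
  unfolding CX_def by blast

lemma CX_0: "set_ideal \<Y> \<Longrightarrow> (\<lambda>A. 0) \<in> CX n \<Y>"
  using set_ideal_empty by (fastforce intro: CX_I coarse_chain_0 simp: supported_on_def)

lemma CX_add:
  assumes "set_ideal \<Y>" "\<mu> \<in> CX n \<Y>" "\<nu> \<in> CX n \<Y>"
  shows "\<mu> + \<nu> \<in> CX n \<Y>"
proof -
  obtain Y1 Y2 where "coarse_chain n \<mu>" "Y1 \<in> \<Y>" "supported_on n Y1 \<mu>"
      "coarse_chain n \<nu>" "Y2 \<in> \<Y>" "supported_on n Y2 \<nu>"
    using assms(2,3) by (metis CX_E)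
  then show ?thesis
    using set_ideal_Un[OF assms(1)] supported_on_mono[of n _ _ "Y1 \<union> Y2"]
    by (intro CX_I[of n _ "Y1 \<union> Y2"] coarse_chain_add supported_on_add) auto
qed

lemma CX_cmult: "\<mu> \<in> CX n \<Y> \<Longrightarrow> (\<lambda>A. c * \<mu> A) \<in> CX n \<Y>"
  by (metis CX_E CX_I coarse_chain_cmult supported_on_cmult)

lemma CX_uminus: "\<mu> \<in> CX n \<Y> \<Longrightarrow> - \<mu> \<in> CX n \<Y>"
  unfolding uminus_eq_cmult by (rule CX_cmult)

lemma CX_diff: "set_ideal \<Y> \<Longrightarrow> \<mu> \<in> CX n \<Y> \<Longrightarrow> \<nu> \<in> CX n \<Y> \<Longrightarrow> \<mu> - \<nu> \<in> CX n \<Y>"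
  unfolding diff_conv_add_uminus by (rule CX_add[OF _ _ CX_uminus])

lemma CX_mono: "\<Y> \<subseteq> \<Y>' \<Longrightarrow> CX n \<Y> \<subseteq> CX n \<Y>'"
  unfolding CX_def by blast

lemma CX_bd:
  assumes "proper_metric_space TYPE('a::metric_space)" "\<mu> \<in> CX n (\<Y> :: 'a set set)"
  shows "bd n \<mu> \<in> CX (n - 1) \<Y>"
proof -
  obtain Y where "coarse_chain n \<mu>" "Y \<in> \<Y>" "supported_on n Y \<mu>" using assms(2) by (rule CX_E)
  then show ?thesis
    using coarse_chain_bd[OF assms(1)] supported_on_bd by (blast intro: CX_I elim: coarse_chainE)
qed

lemma CX_fam_cap:
  assumes "big_family \<X>" "\<mu> \<in> CX n \<X>" "\<mu> \<in> CX n \<Y>"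
  shows "\<mu> \<in> CX n (fam_cap \<X> \<Y>)"
proof -
  obtain X Y where \<mu>: "coarse_chain n \<mu>" "X \<in> \<X>" "supported_on n X \<mu>" "Y \<in> \<Y>" "supported_on n Y \<mu>"
    using assms(2,3) by (metis CX_E)
  then have "supported_on n (closure X \<inter> Y) \<mu>"
    by (intro supported_on_Int supported_on_mono[OF \<mu>(3) closure_subset])
       (auto elim: coarse_chainE intro: borel_closed)
  moreover have "closure X \<inter> Y \<in> fam_cap \<X> \<Y>"
    using big_family_closure[OF assms(1) \<mu>(2)] \<mu>(4) unfolding fam_cap_def by blast
  ultimately show ?thesis using \<mu>(1) CX_I by blast
qed

lemma cube_Un_diag_thick:
  assumes "x \<in> cube n (X \<union> W)" "x \<in> diag_thick n R" "x \<notin> cube n X"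
  shows "x \<in> cube n (thick (2 * R) W)"
proof -
  obtain j where j: "j \<le> n" "x j \<in> W" using assms(1,3) by (auto simp: mem_cube_iff)
  have "dist (x k) (x j) \<le> 2 * R" if "k \<le> n" for k
    using assms(2) diag_thick_subset_close_tuples j(1) that unfolding close_tuples_def by blast
  then have "infdist (x k) W \<le> 2 * R" if "k \<le> n" for k
    using infdist_le[OF j(2), of "x k"] that by fastforce
  then show ?thesis using assms(1) j(2) by (auto simp: mem_cube_iff thick_def)
qed

definition chain_restrict :: "nat \<Rightarrow> 'a::metric_space set \<Rightarrow> 'a chain_measure \<Rightarrow> 'a chain_measure" where
  "chain_restrict n Y \<mu> = (\<lambda>A. if A \<in> bsets n then \<mu> (A \<inter> cube n Y) else 0)"

lemma coarse_chain_restrict: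
  fixes Y :: "'a::metric_space set"
  assumes "coarse_chain n \<mu>" "Y \<in> sets borel"
  shows "coarse_chain n (chain_restrict n Y \<mu>)"
proof -
  obtain R where lf: "locfin_measure n \<mu>" and sid: "supp_in_diag n R \<mu>"
    using assms(1) by (rule coarse_chainE)
  have "supp_in_diag n R (chain_restrict n Y \<mu>)"
    unfolding supp_in_diag_def
  proof (intro ballI impI)
    fix A :: "(nat \<Rightarrow> 'a) set" assume A: "A \<in> bsets n" "A \<inter> diag_thick n R = {}"
    then have "\<mu> (A \<inter> cube n Y) = 0"
      using sid bsets_Int[OF A(1) sets_cube[OF assms(2)]] unfolding supp_in_diag_def by blast
    then show "chain_restrict n Y \<mu> A = 0" by (simp add: chain_restrict_def)
  qed
  then show ?thesis
    using locfin_measure_restrict[OF lf sets_cube[OF assms(2)]]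
    unfolding coarse_chain_def chain_restrict_def by blast
qed

lemma supported_on_restrict: "locfin_measure n \<mu> \<Longrightarrow> supported_on n Y (chain_restrict n Y \<mu>)"
  unfolding supported_on_def chain_restrict_def by (simp add: Int_commute locfin_measure_empty)

lemma chain_restrict_complement:
  assumes "locfin_measure n \<mu>" "Y \<in> sets borel" "A \<in> bsets n"
  shows "(\<mu> - chain_restrict n Y \<mu>) A = \<mu> (A - cube n Y)"
  using locfin_measure_split[OF assms(1,3) sets_cube[OF assms(2)]] assms(3)
  by (simp add: chain_restrict_def)

lemma CX_fam_cup_decompose:
  fixes \<X> \<W> :: "'a::metric_space set set"
  assumes X: "big_family \<X>" and W: "big_family \<W>" and \<mu>: "\<mu> \<in> CX n (fam_cup \<X> \<W>)"
  obtains \<xi> \<omega> where "\<xi> \<in> CX n \<X>" "\<omega> \<in> CX n \<W>" "\<mu> = \<xi> + \<omega>"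
proof -
  obtain X1 W1 where cc: "coarse_chain n \<mu>" and XW: "X1 \<in> \<X>" "W1 \<in> \<W>"
      and supp: "supported_on n (X1 \<union> W1) \<mu>"
    using \<mu> unfolding fam_cup_def by (auto elim: CX_E)
  obtain R where lf: "locfin_measure n \<mu>" and sid: "supp_in_diag n R \<mu>" using cc by (rule coarse_chainE)
  define Xc Wc where "Xc = closure X1" and "Wc = closure W1"
  have borel: "Xc \<in> sets borel" "Xc \<union> Wc \<in> sets borel" by (simp_all add: Xc_def Wc_def borel_closed)
  define \<xi> where "\<xi> = chain_restrict n Xc \<mu>"
  have cc\<xi>: "coarse_chain n \<xi>" unfolding \<xi>_def by (rule coarse_chain_restrict[OF cc borel(1)])
  have \<xi>X: "\<xi> \<in> CX n \<X>"
    using big_family_closure[OF X XW(1)] supported_on_restrict[OF lf]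
    by (intro CX_I[OF cc\<xi>]) (auto simp: \<xi>_def Xc_def)
  have vanish: "\<forall>A\<in>bsets n. A \<inter> (cube n (Xc \<union> Wc) \<inter> diag_thick n R) = {} \<longrightarrow> \<mu> A = 0"
    using supported_on_mono[OF supp, of "Xc \<union> Wc"] closure_subset sid sets_cube[OF borel(2)]
    by (intro locfin_measure_vanish_Int[OF lf]) (auto simp: Xc_def Wc_def supported_on_def supp_in_diag_def)
  have "supported_on n (thick (2 * R) Wc) (\<mu> - \<xi>)"
    unfolding supported_on_def
  proof (intro ballI impI)
    fix A :: "(nat \<Rightarrow> 'a) set" assume A: "A \<in> bsets n" "A \<inter> cube n (thick (2 * R) Wc) = {}"
    then have "(A - cube n Xc) \<inter> (cube n (Xc \<union> Wc) \<inter> diag_thick n R) = {}"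
      using cube_Un_diag_thick by blast
    then have "\<mu> (A - cube n Xc) = 0" using vanish bsets_Diff[OF A(1) sets_cube[OF borel(1)]] by blast
    then show "(\<mu> - \<xi>) A = 0" unfolding \<xi>_def using chain_restrict_complement[OF lf borel(1) A(1)] by simp
  qed
  then have "\<mu> - \<xi> \<in> CX n \<W>"
    using coarse_chain_diff[OF cc cc\<xi>] big_family_thick[OF W big_family_closure[OF W XW(2)]]
    by (auto simp: Wc_def intro: CX_I)
  then show ?thesis using that[OF \<xi>X] by simp
qed

subsection \<open>Relative homology and excision\<close>

lemma chain_add_eq: "chain_add \<mu> \<nu> = \<mu> + \<nu>"
  by (simp add: chain_add_def fun_eq_iff)

lemma rel_bdriesI:
  "\<beta> = bd (Suc n) b + a \<Longrightarrow> b \<in> CX (Suc n) \<X> \<Longrightarrow> a \<in> CX n \<A> \<Longrightarrow> \<beta> \<in> rel_bdries n \<X> \<A>"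
  unfolding rel_bdries_def chain_add_eq by blast

lemma rel_bdriesE:
  assumes "\<beta> \<in> rel_bdries n \<X> \<A>"
  obtains b a where "\<beta> = bd (Suc n) b + a" "b \<in> CX (Suc n) \<X>" "a \<in> CX n \<A>"
  using assms unfolding rel_bdries_def chain_add_eq by blast

lemma rel_bdries_mono: "\<X> \<subseteq> \<X>' \<Longrightarrow> \<A> \<subseteq> \<A>' \<Longrightarrow> rel_bdries n \<X> \<A> \<subseteq> rel_bdries n \<X>' \<A>'"
  unfolding rel_bdries_def using CX_mono by blast

lemma rel_cycles_mono: "\<X> \<subseteq> \<X>' \<Longrightarrow> \<A> \<subseteq> \<A>' \<Longrightarrow> rel_cycles n \<X> \<A> \<subseteq> rel_cycles n \<X>' \<A>'"
  unfolding rel_cycles_def using CX_mono by blast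

lemma zero_in_rel_bdries: "set_ideal \<X> \<Longrightarrow> set_ideal \<A> \<Longrightarrow> 0 \<in> rel_bdries n \<X> \<A>"
  by (rule rel_bdriesI[OF _ CX_0 CX_0]) (simp_all add: bd_0 zero_fun_def)

lemma rel_bdries_add:
  assumes P: "proper_metric_space TYPE('a::metric_space)" and "set_ideal \<X>" "set_ideal (\<A> :: 'a set set)"
    and "\<beta> \<in> rel_bdries n \<X> \<A>" "\<gamma> \<in> rel_bdries n \<X> \<A>"
  shows "\<beta> + \<gamma> \<in> rel_bdries n \<X> \<A>"
proof -
  obtain b a b' a' where "\<beta> = bd (Suc n) b + a" "b \<in> CX (Suc n) \<X>" "a \<in> CX n \<A>"
      "\<gamma> = bd (Suc n) b' + a'" "b' \<in> CX (Suc n) \<X>" "a' \<in> CX n \<A>"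
    using assms(4,5) by (metis rel_bdriesE)
  moreover have "bd (Suc n) (b + b') = bd (Suc n) b + bd (Suc n) b'"
    using calculation by (intro bd_add[OF P] CX_coarse_chain)
  ultimately show ?thesis
    using assms(2,3) by (intro rel_bdriesI[of _ n "b + b'" "a + a'"] CX_add) (simp_all add: ac_simps)
qed

lemma rel_bdries_uminus:
  assumes P: "proper_metric_space TYPE('a::metric_space)" and "\<beta> \<in> rel_bdries n \<X> (\<A> :: 'a set set)"
  shows "- \<beta> \<in> rel_bdries n \<X> \<A>"
proof -
  obtain b a where "\<beta> = bd (Suc n) b + a" "b \<in> CX (Suc n) \<X>" "a \<in> CX n \<A>"
    using assms(2) by (rule rel_bdriesE)
  moreover have "bd (Suc n) (- b) = - bd (Suc n) b"
    using calculation by (intro bd_uminus[OF P] CX_coarse_chain)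
  ultimately show ?thesis by (intro rel_bdriesI[of _ n "- b" "- a"] CX_uminus) simp_all
qed

definition HX_class :: "nat \<Rightarrow> 'a::metric_space set set \<Rightarrow> 'a set set
    \<Rightarrow> 'a chain_measure \<Rightarrow> 'a chain_measure set" where
  "HX_class n \<X> \<A> c = {c + b | b. b \<in> rel_bdries n \<X> \<A>}"

lemma HX_eq_image_HX_class: "HX n \<X> \<A> = HX_class n \<X> \<A> ` rel_cycles n \<X> \<A>"
  unfolding HX_def HX_class_def chain_add_eq ..

lemma HX_class_eq_iff:
  assumes P: "proper_metric_space TYPE('a::metric_space)" and "set_ideal \<X>" "set_ideal (\<A> :: 'a set set)"
  shows "HX_class n \<X> \<A> c = HX_class n \<X> \<A> c' \<longleftrightarrow> c - c' \<in> rel_bdries n \<X> \<A>"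
proof
  assume "HX_class n \<X> \<A> c = HX_class n \<X> \<A> c'"
  moreover have "c \<in> HX_class n \<X> \<A> c"
    unfolding HX_class_def using zero_in_rel_bdries[OF assms(2,3)] by force
  ultimately obtain b where "c = c' + b" "b \<in> rel_bdries n \<X> \<A>" unfolding HX_class_def by blast
  then show "c - c' \<in> rel_bdries n \<X> \<A>" by simp
next
  assume d: "c - c' \<in> rel_bdries n \<X> \<A>"
  have "c + b \<in> HX_class n \<X> \<A> c'" if "b \<in> rel_bdries n \<X> \<A>" for b
    using rel_bdries_add[OF assms d that] unfolding HX_class_def by (auto intro: exI[of _ "c - c' + b"])
  moreover have "c' + b \<in> HX_class n \<X> \<A> c" if "b \<in> rel_bdries n \<X> \<A>" for b
    using rel_bdries_add[OF assms rel_bdries_uminus[OF P d] that] unfolding HX_class_def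
    by (auto intro: exI[of _ "- (c - c') + b"])
  ultimately show "HX_class n \<X> \<A> c = HX_class n \<X> \<A> c'" unfolding HX_class_def by blast
qed

lemma HX_incl_HX_class:
  assumes P: "proper_metric_space TYPE('a::metric_space)"
    and "set_ideal \<X>" "set_ideal \<A>" "set_ideal \<X>'" "set_ideal (\<A>' :: 'a set set)"
    and "\<X> \<subseteq> \<X>'" "\<A> \<subseteq> \<A>'"
  shows "HX_incl n \<X>' \<A>' (HX_class n \<X> \<A> c) = HX_class n \<X>' \<A>' c"
  unfolding HX_incl_def HX_class_def chain_add_eq
proof (intro equalityI subsetI)
  fix y assume "y \<in> {x + b |x b. x \<in> {c + b |b. b \<in> rel_bdries n \<X> \<A>} \<and> b \<in> rel_bdries n \<X>' \<A>'}"
  then obtain b0 b where "y = c + (b0 + b)" "b0 \<in> rel_bdries n \<X> \<A>" "b \<in> rel_bdries n \<X>' \<A>'"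
    by (auto simp: add.assoc)
  then have "y = c + (b0 + b)" "b0 \<in> rel_bdries n \<X>' \<A>'" "b \<in> rel_bdries n \<X>' \<A>'"
    using rel_bdries_mono[OF assms(6,7)] by blast+
  then show "y \<in> {c + b |b. b \<in> rel_bdries n \<X>' \<A>'}" using rel_bdries_add[OF P assms(4,5)] by blast
next
  fix y assume "y \<in> {c + b |b. b \<in> rel_bdries n \<X>' \<A>'}"
  then obtain b where "y = (c + 0) + b" "b \<in> rel_bdries n \<X>' \<A>'" by auto
  then show "y \<in> {x + b |x b. x \<in> {c + b |b. b \<in> rel_bdries n \<X> \<A>} \<and> b \<in> rel_bdries n \<X>' \<A>'}"
    using zero_in_rel_bdries[OF assms(2,3)] by blast
qed

locale excision =
  fixes \<X> \<A> \<X>' \<A>' :: "'a::metric_space set set"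
  assumes proper: "proper_metric_space TYPE('a)"
    and set_ideals: "set_ideal \<X>" "set_ideal \<A>" "set_ideal \<X>'" "set_ideal \<A>'"
    and subsets: "\<X> \<subseteq> \<X>'" "\<A> \<subseteq> \<A>'"
    and CX_split:
      "\<And>m \<mu>. \<mu> \<in> CX m \<X>' \<Longrightarrow> \<exists>\<xi> \<alpha>. \<xi> \<in> CX m \<X> \<and> \<alpha> \<in> CX m \<A>' \<and> \<mu> = \<xi> + \<alpha>"
    and CX_meet: "\<And>m. CX m \<X> \<inter> CX m \<A>' \<subseteq> CX m \<A>"
begin

lemma rel_bdries_reflect:
  assumes "\<beta> \<in> CX n \<X>" "\<beta> \<in> rel_bdries n \<X>' \<A>'"
  shows "\<beta> \<in> rel_bdries n \<X> \<A>"
proof -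
  obtain b a where \<beta>: "\<beta> = bd (Suc n) b + a" "b \<in> CX (Suc n) \<X>'" "a \<in> CX n \<A>'"
    using assms(2) by (rule rel_bdriesE)
  obtain \<xi> \<alpha> where \<xi>: "\<xi> \<in> CX (Suc n) \<X>" "\<alpha> \<in> CX (Suc n) \<A>'" "b = \<xi> + \<alpha>"
    using CX_split[OF \<beta>(2)] by blast
  have "bd (Suc n) b = bd (Suc n) \<xi> + bd (Suc n) \<alpha>"
    unfolding \<xi>(3) by (rule bd_add[OF proper CX_coarse_chain[OF \<xi>(1)] CX_coarse_chain[OF \<xi>(2)]])
  then have "\<beta> - bd (Suc n) \<xi> = bd (Suc n) \<alpha> + a" using \<beta>(1) by simp
  moreover have "bd (Suc n) \<alpha> + a \<in> CX n \<A>'"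
    using CX_add[OF set_ideals(4) _ \<beta>(3)] CX_bd[OF proper \<xi>(2)] by simp
  moreover have "\<beta> - bd (Suc n) \<xi> \<in> CX n \<X>"
    using CX_diff[OF set_ideals(1) assms(1)] CX_bd[OF proper \<xi>(1)] by simp
  ultimately have "\<beta> - bd (Suc n) \<xi> \<in> CX n \<A>" using CX_meet by auto
  then show ?thesis using \<xi>(1) by (intro rel_bdriesI[of _ n \<xi> "\<beta> - bd (Suc n) \<xi>"]) simp_all
qed

lemma rel_cycles_lift:
  assumes "c' \<in> rel_cycles n \<X>' \<A>'"
  obtains c where "c \<in> rel_cycles n \<X> \<A>" "c' - c \<in> rel_bdries n \<X>' \<A>'"
proof -
  have c': "c' \<in> CX n \<X>'" "n = 0 \<or> bd n c' \<in> CX (n - 1) \<A>'"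
    using assms unfolding rel_cycles_def by auto
  obtain \<xi> \<alpha> where \<xi>: "\<xi> \<in> CX n \<X>" "\<alpha> \<in> CX n \<A>'" "c' = \<xi> + \<alpha>"
    using CX_split[OF c'(1)] by blast
  have "bd n \<xi> \<in> CX (n - 1) \<A>" if "n \<noteq> 0"
  proof -
    have "bd n c' = bd n \<xi> + bd n \<alpha>"
      unfolding \<xi>(3) by (rule bd_add[OF proper CX_coarse_chain[OF \<xi>(1)] CX_coarse_chain[OF \<xi>(2)]])
    then have "bd n \<xi> = bd n c' - bd n \<alpha>" by simp
    then have "bd n \<xi> \<in> CX (n - 1) \<A>'"
      using c'(2) that CX_diff[OF set_ideals(4)] CX_bd[OF proper \<xi>(2)] by simp
    then show ?thesis using CX_meet CX_bd[OF proper \<xi>(1)] by blast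
  qed
  then have "\<xi> \<in> rel_cycles n \<X> \<A>" using \<xi>(1) unfolding rel_cycles_def by blast
  moreover have "c' - \<xi> \<in> rel_bdries n \<X>' \<A>'"
    using \<xi>(2,3) CX_0[OF set_ideals(3)]
    by (intro rel_bdriesI[of _ n "\<lambda>A. 0" \<alpha>]) (simp_all add: bd_0 fun_eq_iff)
  ultimately show ?thesis using that by blast
qed

theorem bij_betw_HX_incl: "bij_betw (HX_incl n \<X>' \<A>') (HX n \<X> \<A>) (HX n \<X>' \<A>')"
proof -
  note incl = HX_incl_HX_class[OF proper set_ideals subsets]
  note eq_iff = HX_class_eq_iff[OF proper set_ideals(1,2)] HX_class_eq_iff[OF proper set_ideals(3,4)]
  have "inj_on (HX_incl n \<X>' \<A>') (HX n \<X> \<A>)"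
  proof (rule inj_onI)
    fix C1 C2 assume C: "C1 \<in> HX n \<X> \<A>" "C2 \<in> HX n \<X> \<A>" "HX_incl n \<X>' \<A>' C1 = HX_incl n \<X>' \<A>' C2"
    then obtain c1 c2 where c: "c1 \<in> rel_cycles n \<X> \<A>" "c2 \<in> rel_cycles n \<X> \<A>"
        "C1 = HX_class n \<X> \<A> c1" "C2 = HX_class n \<X> \<A> c2"
      unfolding HX_eq_image_HX_class by blast
    then have "c1 - c2 \<in> rel_bdries n \<X>' \<A>'" using C(3) eq_iff(2) by (simp add: incl)
    moreover have "c1 - c2 \<in> CX n \<X>"
      using c(1,2) CX_diff[OF set_ideals(1)] unfolding rel_cycles_def by blast
    ultimately show "C1 = C2" using rel_bdries_reflect c(3,4) eq_iff(1) by blast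
  qed
  moreover have "HX_incl n \<X>' \<A>' ` HX n \<X> \<A> = HX n \<X>' \<A>'"
  proof
    show "HX_incl n \<X>' \<A>' ` HX n \<X> \<A> \<subseteq> HX n \<X>' \<A>'"
    proof
      fix D assume "D \<in> HX_incl n \<X>' \<A>' ` HX n \<X> \<A>"
      then obtain c where "c \<in> rel_cycles n \<X> \<A>" "D = HX_class n \<X>' \<A>' c"
        unfolding HX_eq_image_HX_class by (auto simp: incl)
      then show "D \<in> HX n \<X>' \<A>'" using rel_cycles_mono[OF subsets] unfolding HX_eq_image_HX_class by blast
    qed
  next
    show "HX n \<X>' \<A>' \<subseteq> HX_incl n \<X>' \<A>' ` HX n \<X> \<A>"
    proof
      fix D assume "D \<in> HX n \<X>' \<A>'"
      then obtain c' where c': "c' \<in> rel_cycles n \<X>' \<A>'" "D = HX_class n \<X>' \<A>' c'"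
        unfolding HX_eq_image_HX_class by blast
      obtain c where c: "c \<in> rel_cycles n \<X> \<A>" "c' - c \<in> rel_bdries n \<X>' \<A>'"
        using c'(1) by (rule rel_cycles_lift)
      then have "D = HX_incl n \<X>' \<A>' (HX_class n \<X> \<A> c)" using c'(2) eq_iff(2) by (simp add: incl)
      then show "D \<in> HX_incl n \<X>' \<A>' ` HX n \<X> \<A>" using c(1) unfolding HX_eq_image_HX_class by blast
    qed
  qed
  ultimately show ?thesis unfolding bij_betw_def by blast
qed

end

theorem proposition3p5:
  fixes \<X> \<Z> \<W> :: "'a::metric_space set set" and n :: nat
  assumes "proper_metric_space TYPE('a)"
    and "big_family \<X>" and "big_family \<Z>" and "big_family \<W>"
    and "fam_cap \<X> \<W> \<subseteq> fam_cap \<X> \<Z>"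
  shows "bij_betw (HX_incl n (fam_cup \<X> \<W>) (fam_cup (fam_cap \<X> \<Z>) \<W>))
           (HX n \<X> (fam_cap \<X> \<Z>))
           (HX n (fam_cup \<X> \<W>) (fam_cup (fam_cap \<X> \<Z>) \<W>))"
proof -
  have ideals: "set_ideal \<X>" "set_ideal \<Z>" "set_ideal \<W>"
    using assms(2-4) by (auto intro: big_family_set_ideal)
  have ideal_XZ: "set_ideal (fam_cap \<X> \<Z>)" by (rule set_ideal_fam_cap[OF ideals(1,2)])
  have "excision \<X> (fam_cap \<X> \<Z>) (fam_cup \<X> \<W>) (fam_cup (fam_cap \<X> \<Z>) \<W>)"
  proof (rule excision.intro)
    show "\<exists>\<xi> \<alpha>. \<xi> \<in> CX m \<X> \<and> \<alpha> \<in> CX m (fam_cup (fam_cap \<X> \<Z>) \<W>) \<and> \<mu> = \<xi> + \<alpha>"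
      if \<mu>: "\<mu> \<in> CX m (fam_cup \<X> \<W>)" for m \<mu>
    proof -
      obtain \<xi> \<omega> where "\<xi> \<in> CX m \<X>" "\<omega> \<in> CX m \<W>" "\<mu> = \<xi> + \<omega>"
        by (rule CX_fam_cup_decompose[OF assms(2,4) \<mu>])
      then show ?thesis using CX_mono[OF fam_cup_subset_right[OF ideal_XZ]] by blast
    qed
    show "CX m \<X> \<inter> CX m (fam_cup (fam_cap \<X> \<Z>) \<W>) \<subseteq> CX m (fam_cap \<X> \<Z>)" for m
      using CX_fam_cap[OF assms(2)] CX_mono[OF fam_cap_fam_cup_subset[OF ideals(1,2) assms(5)]] by blast
    show "set_ideal (fam_cup \<X> \<W>)" "set_ideal (fam_cup (fam_cap \<X> \<Z>) \<W>)"
      using set_ideal_fam_cup ideals ideal_XZ by blast+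
    show "\<X> \<subseteq> fam_cup \<X> \<W>" "fam_cap \<X> \<Z> \<subseteq> fam_cup (fam_cap \<X> \<Z>) \<W>"
      using fam_cup_subset_left ideals(3) by blast+
  qed (rule assms(1) ideals(1) ideal_XZ)+
  then show ?thesis by (rule excision.bij_betw_HX_incl)
qed

end
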